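(* As classes of circuit families (compared by the unitaries they implement), $\mathsf{A}^{\mathsf{CQ}}_1 \not\subseteq \mathsf{A}^{\mathsf{QC}}_1$ and $\mathsf{A}^{\mathsf{QC}}_1 \not\subseteq \mathsf{A}^{\mathsf{CQ}}_1$.
   Context: $\mathsf{QNC}^0$ denotes families of $n$-qubit circuits of constant depth (independent of $n$) built from arbitrary two-qubit gates acting on any pair of qubits (no geometric locality). A Clifford circuit is an arbitrary-size circuit of Clifford gates. $\mathsf{A}^{\mathsf{CQ}}_k$ is the class of circuit families $\{C_n\}$ for which there is a constant $d$ such that each $C_n$ acts on $n$ qubits and equals a product of $k+1$ circuits alternating between Clifford circuits and depth-$d$ two-qubit-gate circuits, with the first circuit applied being a Clifford circuit; $\mathsf{A}^{\mathsf{QC}}_k$ is defined the same way but with the first circuit applied being a depth-$d$ (i.e. $\mathsf{QNC}^0$) circuit. Thus $\mathsf{A}^{\mathsf{CQ}}_1$ consists of a Clifford circuit followed by a $\mathsf{QNC}^0$ circuit, and $\mathsf{A}^{\mathsf{QC}}_1$ of a $\mathsf{QNC}^0$ circuit followed by a Clifford circuit. *)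

theory Defs
  imports Complex_Main "Jordan_Normal_Form.Matrix"
begin

text \<open>Quantum circuits on n qubits as complex 2^n x 2^n matrices. The computational
basis state |x> with x < 2^n has qubit i equal to bit i of x.\<close>

definition cadj :: "complex mat \<Rightarrow> complex mat" where
  "cadj U = mat (dim_col U) (dim_row U) (\<lambda>(i,j). cnj (U $$ (j,i)))"

definition unitary_mat :: "nat \<Rightarrow> complex mat \<Rightarrow> bool" where
  "unitary_mat m U \<longleftrightarrow> U \<in> carrier_mat m m \<and> U * cadj U = 1\<^sub>m m"

definition local_index :: "nat list \<Rightarrow> nat \<Rightarrow> nat" where
  "local_index qs x = (\<Sum>j<length qs. (if bit x (qs!j) then 1 else 0) * 2^j)"

text \<open>Embedding of a gate U (a 2^k x 2^k matrix) acting on the distinct qubits qs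
(length k) into the n-qubit space, tensored with the identity on the other qubits.\<close>
definition embed_gate :: "nat \<Rightarrow> nat list \<Rightarrow> complex mat \<Rightarrow> complex mat" where
  "embed_gate n qs U = mat (2^n) (2^n) (\<lambda>(x,y).
     if (\<forall>i<n. i \<notin> set qs \<longrightarrow> bit x i = bit y i)
     then U $$ (local_index qs x, local_index qs y) else 0)"

definition valid_support :: "nat \<Rightarrow> nat list \<Rightarrow> bool" where
  "valid_support n qs \<longleftrightarrow> distinct qs \<and> set qs \<subseteq> {..<n}"

definition hadamard :: "complex mat" where
  "hadamard = mat 2 2 (\<lambda>(i,j). if i = 1 \<and> j = 1 then - 1 / sqrt 2 else 1 / sqrt 2)"

definition phase_S :: "complex mat" where
  "phase_S = mat 2 2 (\<lambda>(i,j). if i = j then (if i = 0 then 1 else \<i>) else 0)"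

text \<open>Local index = bit(control) + 2*bit(target); CNOT flips the target iff control is 1.\<close>
definition cnot :: "complex mat" where
  "cnot = mat 4 4 (\<lambda>(i,j). if i = (if odd j then (j + 2) mod 4 else j) then 1 else 0)"

definition clifford_gate :: "nat \<Rightarrow> complex mat \<Rightarrow> bool" where
  "clifford_gate n G \<longleftrightarrow>
     (\<exists>a<n. G = embed_gate n [a] hadamard \<or> G = embed_gate n [a] phase_S) \<or>
     (\<exists>a<n. \<exists>b<n. a \<noteq> b \<and> G = embed_gate n [a, b] cnot)"

inductive clifford_circuit :: "nat \<Rightarrow> complex mat \<Rightarrow> bool" for n where
  cc_id: "clifford_circuit n (1\<^sub>m (2^n))"
| cc_step: "clifford_circuit n C \<Longrightarrow> clifford_gate n G \<Longrightarrow> clifford_circuit n (G * C)"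

inductive layer :: "nat \<Rightarrow> nat set \<Rightarrow> complex mat \<Rightarrow> bool" for n where
  layer_empty: "layer n {} (1\<^sub>m (2^n))"
| layer_gate: "layer n S L \<Longrightarrow> valid_support n qs \<Longrightarrow> 1 \<le> length qs \<Longrightarrow> length qs \<le> 2 \<Longrightarrow>
     set qs \<inter> S = {} \<Longrightarrow> unitary_mat (2 ^ length qs) U \<Longrightarrow>
     layer n (S \<union> set qs) (embed_gate n qs U * L)"

fun depth_circuit :: "nat \<Rightarrow> nat \<Rightarrow> complex mat \<Rightarrow> bool" where
  "depth_circuit n 0 Q \<longleftrightarrow> Q = 1\<^sub>m (2^n)"
| "depth_circuit n (Suc d) Q \<longleftrightarrow> (\<exists>S L Q'. layer n S L \<and> depth_circuit n d Q' \<and> Q = L * Q')"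

definition A_CQ_1 :: "(nat \<Rightarrow> complex mat) set" where
  "A_CQ_1 = {F. \<exists>d. \<forall>n. \<exists>C Q. clifford_circuit n C \<and> depth_circuit n d Q \<and> F n = Q * C}"

definition A_QC_1 :: "(nat \<Rightarrow> complex mat) set" where
  "A_QC_1 = {F. \<exists>d. \<forall>n. \<exists>C Q. clifford_circuit n C \<and> depth_circuit n d Q \<and> F n = C * Q}"

end

theory Submission
  imports Defs "Jordan_Normal_Form.Determinant"
begin

text \<open>Let \<open>F\<close> be the Clifford circuit of CNOTs from qubit 0 to every other qubit, which turns \<open>Z\<close>
  on qubit 0 into \<open>Z\<close> on all qubits, and let \<open>T = diag(1, \<omega>)\<close> act on qubit 0, where \<open>\<omega>\<close> has
  nonzero real and imaginary part.  Then \<open>T F\<close> lies in \<open>A^CQ_1\<close> and \<open>F T\<close> in \<open>A^QC_1\<close>.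
  Suppose \<open>T F = C Q\<close> with \<open>C\<close> Clifford and \<open>Q\<close> of depth \<open>d\<close>, on \<open>n > 2^d\<close> qubits.  Conjugating a
  single-qubit Pauli \<open>\<sigma>\<close> by \<open>Q\<close> yields an operator supported on at most \<open>2^d\<close> qubits (its light
  cone).  But \<open>Q = C\<^sup>\<dagger> T F\<close>, and \<open>\<sigma>\<close> can be chosen so that \<open>C \<sigma> C\<^sup>\<dagger>\<close> anticommutes with \<open>Z\<close> on qubit 0;
  then \<open>T\<close> splits it into two Paulis differing by that \<open>Z\<close>, and \<open>F\<close> makes them differ on every
  qubit, so the result commutes with no \<open>X\<close> on a single qubit.  The other order is symmetric
  under taking adjoints.\<close>

unbundle bit_operations_syntax

lemma index_mult_mat_sum: "A \<in> carrier_mat m k \<Longrightarrow> B \<in> carrier_mat k l \<Longrightarrow> i < m \<Longrightarrow> j < l \<Longrightarrow>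
   (A * B) $$ (i,j) = (\<Sum>z<k. A $$ (i,z) * B $$ (z,j))"
  by (auto simp: index_mult_mat scalar_prod_def atLeast0LessThan intro!: sum.cong)

lemma index_mult_mat_2: "A \<in> carrier_mat m 2 \<Longrightarrow> B \<in> carrier_mat 2 l \<Longrightarrow> i < m \<Longrightarrow> j < l \<Longrightarrow>
  (A * B) $$ (i,j) = A $$ (i,0) * B $$ (0,j) + A $$ (i,1) * B $$ (1,j)"
  by (subst index_mult_mat_sum[of A m 2 B l]) (auto simp: numeral_2_eq_2 lessThan_Suc add.commute)

lemma index_mult_mat_4: "A \<in> carrier_mat m 4 \<Longrightarrow> B \<in> carrier_mat 4 l \<Longrightarrow> i < m \<Longrightarrow> j < l \<Longrightarrow>
  (A * B) $$ (i,j) = A $$ (i,0) * B $$ (0,j) + A $$ (i,1) * B $$ (1,j) + A $$ (i,2) * B $$ (2,j) + A $$ (i,3) * B $$ (3,j)"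
  by (subst index_mult_mat_sum[of A m 4 B l]) (auto simp: numeral_eq_Suc lessThan_Suc add_ac)

lemma index_mult_diag_left:
  assumes "D \<in> carrier_mat m m" "A \<in> carrier_mat m m" "x < m" "y < m"
    and "\<And>u v. u < m \<Longrightarrow> v < m \<Longrightarrow> D $$ (u,v) = (if u = v then d u else 0)"
  shows "(D * A) $$ (x,y) = d x * A $$ (x,y)"
proof -
  have "(D * A) $$ (x,y) = (\<Sum>z<m. D $$ (x,z) * A $$ (z,y))"
    by (rule index_mult_mat_sum[OF assms(1-4)])
  also have "\<dots> = (\<Sum>z<m. if z = x then d x * A $$ (z,y) else 0)"
    using assms by (intro sum.cong) auto
  finally show ?thesis using assms(3) by simp
qed

lemma index_mult_diag_right:
  assumes "A \<in> carrier_mat m m" "D \<in> carrier_mat m m" "x < m" "y < m"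
    and "\<And>u v. u < m \<Longrightarrow> v < m \<Longrightarrow> D $$ (u,v) = (if u = v then d u else 0)"
  shows "(A * D) $$ (x,y) = A $$ (x,y) * d y"
proof -
  have "(A * D) $$ (x,y) = (\<Sum>z<m. A $$ (x,z) * D $$ (z,y))"
    by (rule index_mult_mat_sum[OF assms(1-4)])
  also have "\<dots> = (\<Sum>z<m. if z = y then A $$ (x,z) * d y else 0)"
    using assms by (intro sum.cong) auto
  finally show ?thesis using assms(4) by simp
qed

lemma mat_mult_assoc:
  "dim_col A = dim_row B \<Longrightarrow> dim_col B = dim_row C \<Longrightarrow> A * B * C = A * (B * (C::complex mat))"
  by (rule assoc_mult_mat[of _ "dim_row A" "dim_col A" _ "dim_col B" _ "dim_col C"]) auto

lemma smult_mult_mat: "dim_col A = dim_row B \<Longrightarrow> (k \<cdot>\<^sub>m A) * B = k \<cdot>\<^sub>m (A * (B::complex mat))"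
  by (rule mult_smult_assoc_mat[of _ "dim_row A" "dim_col A" _ "dim_col B"]) auto

lemma mult_smult_mat: "dim_col A = dim_row B \<Longrightarrow> A * (k \<cdot>\<^sub>m B) = k \<cdot>\<^sub>m (A * (B::complex mat))"
  by (rule mult_smult_distrib[of _ "dim_row A" "dim_col A" _ "dim_col B"]) auto

lemma smult_smult_mat: "a \<cdot>\<^sub>m (b \<cdot>\<^sub>m (A::complex mat)) = (a * b) \<cdot>\<^sub>m A"
  by (rule eq_matI) auto

lemma one_smult_mat [simp]: "1 \<cdot>\<^sub>m (A::complex mat) = A"
  by (rule eq_matI) auto

lemma mult_smult_add_mult:
  assumes "X \<in> carrier_mat m m" "A \<in> carrier_mat m m" "B \<in> carrier_mat m m" "Y \<in> carrier_mat m m"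
  shows "X * (c1 \<cdot>\<^sub>m A + c2 \<cdot>\<^sub>m B) * Y = c1 \<cdot>\<^sub>m (X * A * Y) + c2 \<cdot>\<^sub>m (X * B * (Y::complex mat))"
proof -
  have "X * (c1 \<cdot>\<^sub>m A + c2 \<cdot>\<^sub>m B) = c1 \<cdot>\<^sub>m (X * A) + c2 \<cdot>\<^sub>m (X * B)"
    using assms by (simp add: mult_add_distrib_mat[of X m m _ m] mult_smult_distrib[of X m m _ m])
  then show ?thesis
    using assms by (simp add: add_mult_distrib_mat[of _ m m _ Y m] mult_smult_assoc_mat[of _ m m Y m])
qed

lemma cadj_carrier [simp]: "A \<in> carrier_mat m k \<Longrightarrow> cadj A \<in> carrier_mat k m"
  by (simp add: cadj_def)

lemma cadj_dim [simp]: "dim_row (cadj A) = dim_col A" "dim_col (cadj A) = dim_row A"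
  by (simp_all add: cadj_def)

lemma index_cadj [simp]: "i < dim_col A \<Longrightarrow> j < dim_row A \<Longrightarrow> cadj A $$ (i,j) = cnj (A $$ (j,i))"
  by (simp add: cadj_def)

lemma cadj_cadj [simp]: "cadj (cadj A) = A"
  by (rule eq_matI) auto

lemma cadj_one [simp]: "cadj (1\<^sub>m k) = 1\<^sub>m k"
  by (rule eq_matI) auto

lemma cadj_mult:
  assumes "A \<in> carrier_mat m k" "B \<in> carrier_mat k l"
  shows "cadj (A * B) = cadj B * cadj A"
proof (rule eq_matI)
  fix i j assume "i < dim_row (cadj B * cadj A)" "j < dim_col (cadj B * cadj A)"
  then have i: "i < l" and j: "j < m" using assms by auto
  have "cadj (A * B) $$ (i, j) = cnj (\<Sum>z<k. A $$ (j,z) * B $$ (z,i))"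
    using assms i j by (simp add: index_mult_mat_sum[OF assms j i])
  also have "\<dots> = (\<Sum>z<k. cadj B $$ (i,z) * cadj A $$ (z,j))"
    using assms i j by (auto simp: mult.commute intro!: sum.cong)
  also have "\<dots> = (cadj B * cadj A) $$ (i, j)"
    using assms i j by (subst index_mult_mat_sum[of _ l k _ m]) auto
  finally show "cadj (A * B) $$ (i, j) = (cadj B * cadj A) $$ (i, j)" .
qed (use assms in auto)

lemma unitary_mat_cadj_mult: "unitary_mat m U \<Longrightarrow> cadj U * U = 1\<^sub>m m"
  unfolding unitary_mat_def by (rule mat_mult_left_right_inverse) auto

lemma unitary_mat_cadj: "unitary_mat m U \<Longrightarrow> unitary_mat m (cadj U)"
  by (simp add: unitary_mat_def unitary_mat_cadj_mult)

lemma unitary_mat_mult: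
  assumes "unitary_mat m A" "unitary_mat m B"
  shows "unitary_mat m (A * B)"
proof -
  have A: "A \<in> carrier_mat m m" and B: "B \<in> carrier_mat m m" using assms by (auto simp: unitary_mat_def)
  have "A * B * cadj (A * B) = A * (B * cadj B) * cadj A"
    using A B by (simp add: cadj_mult mat_mult_assoc)
  then show ?thesis using assms A B by (simp add: unitary_mat_def)
qed

lemma bit_less_pow2: "(x::nat) < 2^n \<Longrightarrow> bit x j \<Longrightarrow> j < n"
  by (metis bit_take_bit_iff not_le take_bit_nat_eq_self_iff)

lemma less_pow2_if_bits: "(\<And>j. bit (x::nat) j \<Longrightarrow> j < n) \<Longrightarrow> x < 2^n"
  by (metis bit_take_bit_iff bit_eqI take_bit_nat_eq_self_iff)

lemma nat_eq_if_bits_below: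
  "(x::nat) < 2^n \<Longrightarrow> y < 2^n \<Longrightarrow> (\<And>j. j < n \<Longrightarrow> bit x j = bit y j) \<Longrightarrow> x = y"
  by (metis bit_eqI bit_less_pow2)

lemma xor_less_pow2: "(x::nat) < 2^n \<Longrightarrow> y < 2^n \<Longrightarrow> x XOR y < 2^n"
  by (rule less_pow2_if_bits) (auto simp: bit_xor_iff bit_less_pow2)

lemma xor_cancel_right [simp]: "((y::nat) XOR a) XOR a = y"
  by (rule bit_eqI) (auto simp: bit_xor_iff)

lemma eq_xor_iff: "((x::nat) = y XOR a) \<longleftrightarrow> (y = x XOR a)"
  by (metis xor_cancel_right)

definition of_bits :: "nat \<Rightarrow> (nat \<Rightarrow> bool) \<Rightarrow> nat" where
  "of_bits n P = horner_sum of_bool 2 (map P [0..<n])"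

lemma bit_of_bits: "bit (of_bits n P) i \<longleftrightarrow> i < n \<and> P i"
  unfolding of_bits_def by (auto simp: bit_horner_sum_bit_iff)

lemma of_bits_less: "of_bits n P < 2^n"
  unfolding of_bits_def using horner_sum_bound[of "map P [0..<n]"] by simp

definition update_bit :: "nat \<Rightarrow> nat \<Rightarrow> nat \<Rightarrow> bool \<Rightarrow> nat" where
  "update_bit n a j v = of_bits n (\<lambda>i. if i = j then v else bit a i)"

lemma bit_update_bit: "bit (update_bit n a j v) i \<longleftrightarrow> i < n \<and> (if i = j then v else bit a i)"
  by (simp add: update_bit_def bit_of_bits)

lemma update_bit_less: "update_bit n a j v < 2^n"
  by (simp add: update_bit_def of_bits_less)

section \<open>Gates acting on a list of qubits\<close>

lemma local_index_eq_horner_sum: "local_index qs x = horner_sum of_bool 2 (map (bit x) qs)"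
  unfolding local_index_def horner_sum_eq_sum atLeast0LessThan
  by (rule sum.cong) auto

lemma bit_local_index: "bit (local_index qs x) i \<longleftrightarrow> i < length qs \<and> bit x (qs!i)"
  unfolding local_index_eq_horner_sum by (auto simp add: bit_horner_sum_bit_iff)

lemma local_index_less: "local_index qs x < 2 ^ length qs"
  unfolding local_index_eq_horner_sum using horner_sum_bound[of "map (bit x) qs"] by simp

lemma local_index_cong: "(\<And>i. i \<in> set qs \<Longrightarrow> bit x i = bit y i) \<Longrightarrow> local_index qs x = local_index qs y"
  unfolding local_index_def by (intro sum.cong) auto

lemma local_index_single: "local_index [j] x = of_bool (bit x j)"
  by (simp add: local_index_def)

lemma local_index_pair: "local_index [c,t] x = of_bool (bit x c) + 2 * of_bool (bit x t)"
  by (simp add: local_index_def numeral_2_eq_2 lessThan_Suc)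

definition agree_outside :: "nat \<Rightarrow> nat list \<Rightarrow> nat \<Rightarrow> nat \<Rightarrow> bool" where
  "agree_outside n qs x y \<longleftrightarrow> (\<forall>i<n. i \<notin> set qs \<longrightarrow> bit x i = bit y i)"

lemma agree_outside_sym: "agree_outside n qs x y \<Longrightarrow> agree_outside n qs y x"
  by (auto simp: agree_outside_def)

lemma agree_outside_trans:
  "agree_outside n qs x y \<Longrightarrow> agree_outside n qs y z \<Longrightarrow> agree_outside n qs x z"
  by (auto simp: agree_outside_def)

lemma agree_outside_local_index_eq:
  assumes "x < 2^n" "y < 2^n"
  shows "agree_outside n qs x y \<and> local_index qs x = local_index qs y \<longleftrightarrow> x = y"
proof
  assume agree: "agree_outside n qs x y \<and> local_index qs x = local_index qs y"
  show "x = y"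
  proof (rule nat_eq_if_bits_below[OF assms])
    fix i assume i: "i < n"
    show "bit x i = bit y i"
    proof (cases "i \<in> set qs")
      case True
      then obtain k where "k < length qs" "qs ! k = i" by (auto simp: in_set_conv_nth)
      with agree show ?thesis by (metis bit_local_index)
    qed (use agree i in \<open>auto simp: agree_outside_def\<close>)
  qed
qed (auto simp: agree_outside_def)

lemma embed_gate_carrier [simp]: "embed_gate n qs U \<in> carrier_mat (2^n) (2^n)"
  by (simp add: embed_gate_def)

lemma embed_gate_dim [simp]:
  "dim_row (embed_gate n qs U) = 2^n" "dim_col (embed_gate n qs U) = 2^n"
  by (simp_all add: embed_gate_def)

lemma embed_gate_index: "x < 2^n \<Longrightarrow> y < 2^n \<Longrightarrow> embed_gate n qs U $$ (x,y) =
   (if agree_outside n qs x y then U $$ (local_index qs x, local_index qs y) else 0)"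
  by (simp add: embed_gate_def agree_outside_def)

fun position :: "nat list \<Rightarrow> nat \<Rightarrow> nat" where
  "position [] i = 0"
| "position (q # qs) i = (if q = i then 0 else Suc (position qs i))"

lemma nth_position: "i \<in> set qs \<Longrightarrow> qs ! position qs i = i"
  by (induction qs) auto

lemma position_less: "i \<in> set qs \<Longrightarrow> position qs i < length qs"
  by (induction qs) auto

lemma position_nth: "distinct qs \<Longrightarrow> j < length qs \<Longrightarrow> position qs (qs ! j) = j"
proof (induction qs arbitrary: j)
  case (Cons q qs)
  then show ?case by (cases j) (auto simp: nth_mem)
qed simp

definition set_local_index :: "nat \<Rightarrow> nat list \<Rightarrow> nat \<Rightarrow> nat \<Rightarrow> nat" where
  "set_local_index n qs k x = of_bits n (\<lambda>i. if i \<in> set qs then bit k (position qs i) else bit x i)"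

lemma bit_set_local_index: "bit (set_local_index n qs k x) i \<longleftrightarrow>
    i < n \<and> (if i \<in> set qs then bit k (position qs i) else bit x i)"
  by (simp add: set_local_index_def bit_of_bits)

lemma set_local_index_less: "set_local_index n qs k x < 2^n"
  by (simp add: set_local_index_def of_bits_less)

lemma agree_outside_set_local_index: "agree_outside n qs x (set_local_index n qs k x)"
  by (simp add: agree_outside_def bit_set_local_index)

lemma local_index_set_local_index:
  assumes "valid_support n qs" "k < 2 ^ length qs"
  shows "local_index qs (set_local_index n qs k x) = k"
proof (rule nat_eq_if_bits_below[OF local_index_less assms(2)])
  fix j assume j: "j < length qs"
  have "qs ! j < n" "position qs (qs ! j) = j"
    using assms(1) j unfolding valid_support_def by (auto simp: position_nth dest: nth_mem)
  with j show "bit (local_index qs (set_local_index n qs k x)) j = bit k j"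
    by (simp add: bit_local_index bit_set_local_index)
qed

lemma set_local_index_local_index:
  assumes "z < 2^n" "agree_outside n qs x z"
  shows "set_local_index n qs (local_index qs z) x = z"
proof (rule nat_eq_if_bits_below[OF set_local_index_less assms(1)])
  fix i assume "i < n"
  then show "bit (set_local_index n qs (local_index qs z) x) i = bit z i"
    using assms(2)
    by (cases "i \<in> set qs") (auto simp: bit_set_local_index bit_local_index position_less
        nth_position agree_outside_def)
qed

lemma embed_gate_mult:
  assumes vs: "valid_support n qs"
    and U: "U \<in> carrier_mat (2^length qs) (2^length qs)"
    and V: "V \<in> carrier_mat (2^length qs) (2^length qs)"
  shows "embed_gate n qs U * embed_gate n qs V = embed_gate n qs (U * V)"
proof (rule eq_matI)
  fix x y assume "x < dim_row (embed_gate n qs (U * V))" "y < dim_col (embed_gate n qs (U * V))"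
  then have x: "x < 2^n" and y: "y < 2^n" by auto
  have "(embed_gate n qs U * embed_gate n qs V) $$ (x,y) =
     (\<Sum>z<2^n. embed_gate n qs U $$ (x,z) * embed_gate n qs V $$ (z,y))"
    using x y by (intro index_mult_mat_sum[of _ "2^n" "2^n" _ "2^n"]) auto
  also have "\<dots> = embed_gate n qs (U * V) $$ (x,y)"
  proof (cases "agree_outside n qs x y")
    case False
    then have "embed_gate n qs U $$ (x,z) * embed_gate n qs V $$ (z,y) = 0" if "z < 2^n" for z
      using that x y agree_outside_trans[of n qs x z y] by (auto simp: embed_gate_index)
    then show ?thesis using False x y by (simp add: embed_gate_index del: mult_eq_0_iff)
  next
    case True
    let ?li = "local_index qs"
    have "(\<Sum>z<2^n. embed_gate n qs U $$ (x,z) * embed_gate n qs V $$ (z,y)) =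
          (\<Sum>z\<in>{z. z < 2^n \<and> agree_outside n qs x z}. U $$ (?li x, ?li z) * V $$ (?li z, ?li y))"
      using x y True
      by (intro sum.mono_neutral_cong_right)
         (auto simp: embed_gate_index intro: agree_outside_trans agree_outside_sym)
    also have "\<dots> = (\<Sum>k<2 ^ length qs. U $$ (?li x, k) * V $$ (k, ?li y))"
      \<comment> \<open>the basis states agreeing with \<open>x\<close> outside \<open>qs\<close> are parametrized by their local index\<close>
      by (rule sum.reindex_bij_witness[where i = "\<lambda>k. set_local_index n qs k x" and j = ?li])
         (auto simp: set_local_index_local_index local_index_set_local_index[OF vs]
           local_index_less set_local_index_less agree_outside_set_local_index)
    also have "\<dots> = (U * V) $$ (?li x, ?li y)"
      using U V by (subst index_mult_mat_sum[OF U V]) (auto simp: local_index_less)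
    finally show ?thesis using True x y by (simp add: embed_gate_index)
  qed
  finally show "(embed_gate n qs U * embed_gate n qs V) $$ (x,y) = embed_gate n qs (U * V) $$ (x,y)" .
qed auto

lemma embed_gate_one: "embed_gate n qs (1\<^sub>m (2 ^ length qs)) = 1\<^sub>m (2^n)"
proof (rule eq_matI)
  fix x y assume "x < dim_row (1\<^sub>m (2^n) :: complex mat)" "y < dim_col (1\<^sub>m (2^n) :: complex mat)"
  then have x: "x < 2^n" and y: "y < 2^n" by auto
  show "embed_gate n qs (1\<^sub>m (2 ^ length qs)) $$ (x,y) = 1\<^sub>m (2^n) $$ (x,y)"
    using agree_outside_local_index_eq[OF x y] x y by (auto simp: embed_gate_index local_index_less)
qed auto

lemma index_embed_gate_mult_disjoint:
  assumes vs: "valid_support n qs" "valid_support n qs'" and disj: "set qs \<inter> set qs' = {}"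
    and x: "x < 2^n" and y: "y < 2^n"
  shows "(embed_gate n qs U * embed_gate n qs' V) $$ (x,y) =
    (if agree_outside n (qs @ qs') x y
     then U $$ (local_index qs x, local_index qs y) * V $$ (local_index qs' x, local_index qs' y)
     else 0)" (is "_ = ?rhs")
proof -
  define w where "w = of_bits n (\<lambda>i. if i \<in> set qs then bit y i else bit x i)"
  have w: "w < 2^n" unfolding w_def by (rule of_bits_less)
  have below: "set qs \<subseteq> {..<n}" "set qs' \<subseteq> {..<n}"
    using vs by (auto simp: valid_support_def)
  have li: "local_index qs w = local_index qs y" "local_index qs' w = local_index qs' x"
    using below disj by (auto simp: w_def bit_of_bits intro!: local_index_cong)
  have path: "agree_outside n qs x z \<and> agree_outside n qs' z y \<longleftrightarrow>
      z = w \<and> agree_outside n (qs @ qs') x y" if z: "z < 2^n" for z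
  proof
    assume agree: "agree_outside n qs x z \<and> agree_outside n qs' z y"
    have "z = w"
      by (rule nat_eq_if_bits_below[OF z w]) (use agree disj in \<open>auto simp: agree_outside_def w_def bit_of_bits\<close>)
    with agree show "z = w \<and> agree_outside n (qs @ qs') x y" by (auto simp: agree_outside_def)
  qed (use disj in \<open>auto simp: agree_outside_def w_def bit_of_bits\<close>)
  have "(embed_gate n qs U * embed_gate n qs' V) $$ (x,y) =
      (\<Sum>z<2^n. embed_gate n qs U $$ (x,z) * embed_gate n qs' V $$ (z,y))"
    using x y by (intro index_mult_mat_sum[of _ "2^n" "2^n" _ "2^n"]) auto
  also have "\<dots> = (\<Sum>z<2^n. if z = w then ?rhs else 0)"
    using x y path by (intro sum.cong) (auto simp: embed_gate_index li)
  also have "\<dots> = ?rhs" using w by simp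
  finally show ?thesis .
qed

lemma embed_gate_commute:
  assumes "valid_support n qs" "valid_support n qs'" "set qs \<inter> set qs' = {}"
  shows "embed_gate n qs U * embed_gate n qs' V = embed_gate n qs' V * embed_gate n qs U"
proof (rule eq_matI)
  fix x y assume "x < dim_row (embed_gate n qs' V * embed_gate n qs U)"
    "y < dim_col (embed_gate n qs' V * embed_gate n qs U)"
  then have x: "x < 2^n" and y: "y < 2^n" by auto
  have agree: "agree_outside n (qs' @ qs) x y = agree_outside n (qs @ qs') x y"
    by (auto simp: agree_outside_def)
  have disj': "set qs' \<inter> set qs = {}" using assms(3) by blast
  show "(embed_gate n qs U * embed_gate n qs' V) $$ (x,y) =
      (embed_gate n qs' V * embed_gate n qs U) $$ (x,y)"
    unfolding index_embed_gate_mult_disjoint[OF assms x y]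
      index_embed_gate_mult_disjoint[OF assms(2,1) disj' x y] agree by simp
qed auto

lemma cadj_embed_gate:
  "U \<in> carrier_mat (2 ^ length qs) (2 ^ length qs) \<Longrightarrow> cadj (embed_gate n qs U) = embed_gate n qs (cadj U)"
  by (rule eq_matI) (auto simp: embed_gate_index local_index_less agree_outside_def)

lemma embed_gate_unitary:
  assumes "valid_support n qs" "unitary_mat (2 ^ length qs) U"
  shows "unitary_mat (2^n) (embed_gate n qs U)"
  using assms by (simp add: unitary_mat_def cadj_embed_gate embed_gate_mult embed_gate_one)

lemma hadamard_carrier [simp]: "hadamard \<in> carrier_mat 2 2"
  by (simp add: hadamard_def)

lemma phase_S_carrier [simp]: "phase_S \<in> carrier_mat 2 2"
  by (simp add: phase_S_def)

lemma cnot_carrier [simp]: "cnot \<in> carrier_mat 4 4"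
  by (simp add: cnot_def)

lemma unitary_hadamard: "unitary_mat 2 hadamard"
  unfolding unitary_mat_def
proof (intro conjI eq_matI)
  have sqrt2: "complex_of_real (sqrt 2) * complex_of_real (sqrt 2) = 2"
    by (simp flip: of_real_mult)
  fix i j assume "i < dim_row (1\<^sub>m 2 :: complex mat)" "j < dim_col (1\<^sub>m 2 :: complex mat)"
  then have ij: "i < 2" "j < 2" by auto
  show "(hadamard * cadj hadamard) $$ (i, j) = 1\<^sub>m 2 $$ (i, j)"
    unfolding index_mult_mat_2[OF hadamard_carrier cadj_carrier[OF hadamard_carrier] ij]
    using ij by (auto simp: hadamard_def less_2_cases_iff sqrt2)
qed (auto simp: hadamard_def)

lemma unitary_phase_S: "unitary_mat 2 phase_S"
  unfolding unitary_mat_def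
proof (intro conjI eq_matI)
  fix i j assume "i < dim_row (1\<^sub>m 2 :: complex mat)" "j < dim_col (1\<^sub>m 2 :: complex mat)"
  then have ij: "i < 2" "j < 2" by auto
  show "(phase_S * cadj phase_S) $$ (i, j) = 1\<^sub>m 2 $$ (i, j)"
    unfolding index_mult_mat_2[OF phase_S_carrier cadj_carrier[OF phase_S_carrier] ij]
    using ij by (auto simp: phase_S_def less_2_cases_iff)
qed (auto simp: phase_S_def)

lemma unitary_cnot: "unitary_mat 4 cnot"
  unfolding unitary_mat_def
proof (intro conjI eq_matI)
  fix i j assume "i < dim_row (1\<^sub>m 4 :: complex mat)" "j < dim_col (1\<^sub>m 4 :: complex mat)"
  then have ij: "i < 4" "j < 4" by auto
  then have "i \<in> {0,1,2,3}" "j \<in> {0,1,2,3}" by auto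
  then show "(cnot * cadj cnot) $$ (i, j) = 1\<^sub>m 4 $$ (i, j)"
    unfolding index_mult_mat_4[OF cnot_carrier cadj_carrier[OF cnot_carrier] ij]
    by (auto simp: cnot_def)
qed (auto simp: cnot_def)

lemma cadj_cnot: "cadj cnot = cnot"
proof (rule eq_matI)
  fix i j assume "i < dim_row cnot" "j < dim_col cnot"
  then have "i \<in> {0,1,2,3}" "j \<in> {0,1,2,3}" by (auto simp: cnot_def)
  then show "cadj cnot $$ (i,j) = cnot $$ (i,j)" by (auto simp: cnot_def)
qed (auto simp: cnot_def)

lemma embed_cnot_square:
  assumes "valid_support n [c,t]"
  shows "embed_gate n [c,t] cnot * embed_gate n [c,t] cnot = 1\<^sub>m (2^n)"
proof -
  have "unitary_mat (2^n) (embed_gate n [c,t] cnot)"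
    using embed_gate_unitary[OF assms] unitary_cnot by simp
  then show ?thesis by (simp add: unitary_mat_def cadj_embed_gate cadj_cnot)
qed

section \<open>Pauli operators\<close>

definition sign_bit :: "nat \<Rightarrow> nat \<Rightarrow> nat \<Rightarrow> complex" where
  "sign_bit b y i = (if bit b i \<and> bit y i then -1 else 1)"

definition pauli_sign :: "nat \<Rightarrow> nat \<Rightarrow> nat \<Rightarrow> complex" where
  "pauli_sign n b y = (\<Prod>i<n. sign_bit b y i)"

text \<open>\<open>pauli n a b\<close> is \<open>X^a Z^b\<close>: it maps \<open>|y>\<close> to \<open>(-1)^(b\<cdot>y) |y XOR a>\<close>.\<close>

definition pauli :: "nat \<Rightarrow> nat \<Rightarrow> nat \<Rightarrow> complex mat" where
  "pauli n a b = mat (2^n) (2^n) (\<lambda>(x,y). if x = y XOR a then pauli_sign n b y else 0)"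

abbreviation pauli_X :: "nat \<Rightarrow> nat \<Rightarrow> complex mat" where
  "pauli_X n j \<equiv> pauli n (2^j) 0"

abbreviation pauli_Z :: "nat \<Rightarrow> nat \<Rightarrow> complex mat" where
  "pauli_Z n j \<equiv> pauli n 0 (2^j)"

definition scaled_pauli :: "nat \<Rightarrow> complex mat \<Rightarrow> bool" where
  "scaled_pauli n M \<longleftrightarrow> (\<exists>c a b. c \<noteq> 0 \<and> a < 2^n \<and> b < 2^n \<and> M = c \<cdot>\<^sub>m pauli n a b)"

lemma pauli_carrier [simp]: "pauli n a b \<in> carrier_mat (2^n) (2^n)"
  by (simp add: pauli_def)

lemma pauli_dim [simp]: "dim_row (pauli n a b) = 2^n" "dim_col (pauli n a b) = 2^n"
  by (simp_all add: pauli_def)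

lemma index_pauli:
  "x < 2^n \<Longrightarrow> y < 2^n \<Longrightarrow> pauli n a b $$ (x,y) = (if x = y XOR a then pauli_sign n b y else 0)"
  by (simp add: pauli_def)

lemma pauli_sign_xor_right: "pauli_sign n b (y XOR a) = pauli_sign n b y * pauli_sign n b a"
  unfolding pauli_sign_def sign_bit_def
  by (subst prod.distrib[symmetric]) (intro prod.cong, auto simp: bit_xor_iff)

lemma pauli_sign_xor_left: "pauli_sign n (b XOR b') y = pauli_sign n b y * pauli_sign n b' y"
  unfolding pauli_sign_def sign_bit_def
  by (subst prod.distrib[symmetric]) (intro prod.cong, auto simp: bit_xor_iff)

lemma pauli_sign_commute: "pauli_sign n b y = pauli_sign n y b"
  unfolding pauli_sign_def sign_bit_def by (meson prod.cong)

lemma pauli_sign_square: "pauli_sign n b y * pauli_sign n b y = 1"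
  unfolding pauli_sign_def sign_bit_def by (subst prod.distrib[symmetric]) (intro prod.neutral, auto)

lemma pauli_sign_zero [simp]: "pauli_sign n 0 y = 1" "pauli_sign n b 0 = 1"
  unfolding pauli_sign_def sign_bit_def by auto

lemma pauli_sign_split:
  "J \<subseteq> {..<n} \<Longrightarrow> pauli_sign n b y = (\<Prod>i\<in>J. sign_bit b y i) * (\<Prod>i\<in>{..<n} - J. sign_bit b y i)"
  unfolding pauli_sign_def by (simp add: prod.subset_diff mult.commute)

lemma pauli_sign_single_bit: "j < n \<Longrightarrow> pauli_sign n (2^j) y = (if bit y j then -1 else 1)"
  using pauli_sign_split[of "{j}" n "2^j" y] by (simp add: sign_bit_def bit_exp_iff)

lemma index_pauli_mult_left:
  assumes "A \<in> carrier_mat (2^n) (2^n)" "x < 2^n" "y < 2^n" "a < 2^n"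
  shows "(pauli n a b * A) $$ (x,y) = pauli_sign n b (x XOR a) * A $$ (x XOR a, y)"
proof -
  have "(pauli n a b * A) $$ (x,y) = (\<Sum>z<2^n. pauli n a b $$ (x,z) * A $$ (z,y))"
    using assms by (intro index_mult_mat_sum[of _ "2^n" "2^n" _ "2^n"]) auto
  also have "\<dots> = (\<Sum>z<2^n. if z = x XOR a then pauli_sign n b z * A $$ (z,y) else 0)"
    using assms by (intro sum.cong) (auto simp: index_pauli eq_xor_iff)
  finally show ?thesis using assms xor_less_pow2 by simp
qed

lemma index_pauli_mult_right:
  assumes "A \<in> carrier_mat (2^n) (2^n)" "x < 2^n" "y < 2^n" "a < 2^n"
  shows "(A * pauli n a b) $$ (x,y) = A $$ (x, y XOR a) * pauli_sign n b y"
proof -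
  have "(A * pauli n a b) $$ (x,y) = (\<Sum>z<2^n. A $$ (x,z) * pauli n a b $$ (z,y))"
    using assms by (intro index_mult_mat_sum[of _ "2^n" "2^n" _ "2^n"]) auto
  also have "\<dots> = (\<Sum>z<2^n. if z = y XOR a then A $$ (x,z) * pauli_sign n b y else 0)"
    using assms by (intro sum.cong) (auto simp: index_pauli)
  finally show ?thesis using assms xor_less_pow2 by simp
qed

lemma pauli_mult:
  assumes "a < 2^n" "a' < 2^n"
  shows "pauli n a b * pauli n a' b' = pauli_sign n b a' \<cdot>\<^sub>m pauli n (a XOR a') (b XOR b')"
proof (rule eq_matI)
  fix x y assume "x < dim_row (pauli_sign n b a' \<cdot>\<^sub>m pauli n (a XOR a') (b XOR b'))"
    "y < dim_col (pauli_sign n b a' \<cdot>\<^sub>m pauli n (a XOR a') (b XOR b'))"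
  then have x: "x < 2^n" and y: "y < 2^n" by auto
  have "(pauli n a b * pauli n a' b') $$ (x,y) = pauli n a b $$ (x, y XOR a') * pauli_sign n b' y"
    using assms x y by (intro index_pauli_mult_right) auto
  moreover have "y XOR a' < 2^n" using assms y by (simp add: xor_less_pow2)
  moreover have "(y XOR a') XOR a = y XOR (a XOR a')" by (rule bit_eqI) (auto simp: bit_xor_iff)
  ultimately show "(pauli n a b * pauli n a' b') $$ (x,y) =
      (pauli_sign n b a' \<cdot>\<^sub>m pauli n (a XOR a') (b XOR b')) $$ (x,y)"
    using x y by (simp add: index_pauli pauli_sign_xor_right pauli_sign_xor_left)
qed auto

lemma pauli_commutation:
  assumes "a < 2^n" "a' < 2^n"
  shows "pauli n a b * pauli n a' b' =
    (pauli_sign n b a' * pauli_sign n b' a) \<cdot>\<^sub>m (pauli n a' b' * pauli n a b)"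
proof -
  have "pauli n a' b' * pauli n a b = pauli_sign n b' a \<cdot>\<^sub>m pauli n (a XOR a') (b XOR b')"
    using pauli_mult[OF assms(2,1)] by (simp add: xor.commute)
  then have "(pauli_sign n b a' * pauli_sign n b' a) \<cdot>\<^sub>m (pauli n a' b' * pauli n a b) =
      (pauli_sign n b a' * (pauli_sign n b' a * pauli_sign n b' a)) \<cdot>\<^sub>m pauli n (a XOR a') (b XOR b')"
    by (simp add: smult_smult_mat mult.assoc)
  then show ?thesis using pauli_mult[OF assms] pauli_sign_square by simp
qed

lemma pauli_zero_zero [simp]: "pauli n 0 0 = 1\<^sub>m (2^n)"
  by (rule eq_matI) (auto simp: index_pauli)

lemma scaled_pauli_carrier: "scaled_pauli n M \<Longrightarrow> M \<in> carrier_mat (2^n) (2^n)"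
  by (auto simp: scaled_pauli_def)

lemma scaled_pauliI: "c \<noteq> 0 \<Longrightarrow> a < 2^n \<Longrightarrow> b < 2^n \<Longrightarrow> scaled_pauli n (c \<cdot>\<^sub>m pauli n a b)"
  unfolding scaled_pauli_def by blast

lemma scaled_pauli_pauli: "a < 2^n \<Longrightarrow> b < 2^n \<Longrightarrow> scaled_pauli n (pauli n a b)"
  using scaled_pauliI[of 1] by simp

lemma pauli_X_eq_embed_gate: "j < n \<Longrightarrow> pauli_X n j = embed_gate n [j] (pauli 1 1 0)"
proof (rule eq_matI)
  fix x y assume j: "j < n" and "x < dim_row (embed_gate n [j] (pauli 1 1 0))" "y < dim_col (embed_gate n [j] (pauli 1 1 0))"
  then have x: "x < 2^n" and y: "y < 2^n" by auto
  have "x = y XOR 2^j \<longleftrightarrow> agree_outside n [j] x y \<and> bit x j \<noteq> bit y j"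
  proof
    assume "agree_outside n [j] x y \<and> bit x j \<noteq> bit y j"
    then show "x = y XOR 2^j"
      by (intro nat_eq_if_bits_below[OF x xor_less_pow2[OF y]]) (use j in \<open>auto simp: agree_outside_def bit_xor_iff bit_exp_iff\<close>)
  qed (auto simp: agree_outside_def bit_xor_iff bit_exp_iff)
  then show "pauli_X n j $$ (x,y) = embed_gate n [j] (pauli 1 1 0) $$ (x,y)"
    using x y by (auto simp: index_pauli embed_gate_index local_index_single)
qed auto

lemma pauli_Z_eq_embed_gate: "j < n \<Longrightarrow> pauli_Z n j = embed_gate n [j] (pauli 1 0 1)"
proof (rule eq_matI)
  fix x y assume j: "j < n" and "x < dim_row (embed_gate n [j] (pauli 1 0 1))" "y < dim_col (embed_gate n [j] (pauli 1 0 1))"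
  then have x: "x < 2^n" and y: "y < 2^n" by auto
  have "x = y \<longleftrightarrow> agree_outside n [j] x y \<and> bit x j = bit y j"
  proof
    assume "agree_outside n [j] x y \<and> bit x j = bit y j"
    then show "x = y" by (intro nat_eq_if_bits_below[OF x y]) (auto simp: agree_outside_def)
  qed (auto simp: agree_outside_def)
  moreover have "pauli_Z n j $$ (x,y) = (if x = y then (if bit y j then -1 else 1) else 0)"
    using x y j by (simp add: index_pauli pauli_sign_single_bit)
  moreover have "embed_gate n [j] (pauli 1 0 1) $$ (x,y) =
      (if agree_outside n [j] x y \<and> bit x j = bit y j then (if bit y j then -1 else 1) else 0)"
    using x y pauli_sign_single_bit[of 0 1]
    by (cases "bit x j"; cases "bit y j") (simp_all add: embed_gate_index local_index_single index_pauli bit_Suc_0_iff)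
  ultimately show "pauli_Z n j $$ (x,y) = embed_gate n [j] (pauli 1 0 1) $$ (x,y)" by simp
qed auto

lemma pauli_X_anticommute:
  assumes "j < n" "a < 2^n" "bit b j"
  shows "pauli_X n j * pauli n a b = (-1) \<cdot>\<^sub>m (pauli n a b * pauli_X n j)"
  using pauli_commutation[of "2^j" n a 0 b] pauli_sign_single_bit[of j n b] assms
  by (simp add: pauli_sign_commute[of n b])

lemma pauli_Z_anticommute:
  assumes "j < n" "a < 2^n" "bit a j"
  shows "pauli_Z n j * pauli n a b = (-1) \<cdot>\<^sub>m (pauli n a b * pauli_Z n j)"
  using pauli_commutation[of 0 n a "2^j" b] pauli_sign_single_bit[of j n a] assms by simp

lemma exists_anticommuting_single_qubit_pauli:
  assumes "a < 2^n" "b < 2^n" "a \<noteq> 0 \<or> b \<noteq> 0"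
  obtains j \<sigma> where "j < n" "\<sigma> = pauli_X n j \<or> \<sigma> = pauli_Z n j"
    "\<sigma> * pauli n a b = (-1) \<cdot>\<^sub>m (pauli n a b * \<sigma>)"
proof -
  have "\<exists>j. bit a j \<or> bit b j"
  proof (rule ccontr)
    assume "\<not> (\<exists>j. bit a j \<or> bit b j)"
    then have "a = 0" "b = 0" by (simp_all add: bit_eq_iff)
    with assms(3) show False by simp
  qed
  then obtain j where bits: "bit a j \<or> bit b j" by blast
  then have j: "j < n" using assms(1,2) bit_less_pow2 by blast
  from bits show thesis
  proof
    assume "bit a j"
    then show thesis using that[OF j _ pauli_Z_anticommute[OF j assms(1)]] by simp
  next
    assume "bit b j"
    then show thesis using that[OF j _ pauli_X_anticommute[OF j assms(1)]] by simp
  qed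
qed

lemma pauli_anticommute_Z_imp_bit:
  assumes j: "j < n" and a: "a < 2^n" and k: "k \<noteq> 0"
    and anti: "(k \<cdot>\<^sub>m pauli n a b) * pauli_Z n j = (-1) \<cdot>\<^sub>m (pauli_Z n j * (k \<cdot>\<^sub>m pauli n a b))"
  shows "bit a j"
proof (rule ccontr)
  assume "\<not> bit a j"
  then have sign: "pauli_sign n (2^j) a = 1" using pauli_sign_single_bit[OF j] by simp
  have ZP: "pauli_Z n j * pauli n a b = pauli n a (2^j XOR b)"
    using pauli_mult[of 0 n a "2^j" b] a sign by simp
  have "pauli n a b * pauli_Z n j = pauli_Z n j * pauli n a b"
    using pauli_commutation[OF a, of 0 b "2^j"] sign by simp
  with anti have "k \<cdot>\<^sub>m pauli n a (2^j XOR b) = (- k) \<cdot>\<^sub>m pauli n a (2^j XOR b)"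
    by (simp add: smult_mult_mat mult_smult_mat smult_smult_mat ZP)
  then have "(k \<cdot>\<^sub>m pauli n a (2^j XOR b)) $$ (a, 0) = ((- k) \<cdot>\<^sub>m pauli n a (2^j XOR b)) $$ (a, 0)"
    by simp
  with a k show False by (simp add: index_pauli)
qed

lemma pauli_X_not_commute_pauli_pair:
  assumes j: "j < n" and a: "a < 2^n" and bits: "bit b1 j \<noteq> bit b2 j" and c: "c1 \<noteq> 0" "c2 \<noteq> 0"
  defines "M \<equiv> c1 \<cdot>\<^sub>m pauli n a b1 + c2 \<cdot>\<^sub>m pauli n a b2"
  shows "pauli_X n j * M \<noteq> M * pauli_X n j"
proof
  assume comm: "pauli_X n j * M = M * pauli_X n j"
  let ?e = "(2::nat)^j"
  have e: "?e < 2^n" using j by simp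
  have ae: "a XOR ?e < 2^n" using xor_less_pow2[OF a e] .
  have Mc: "M \<in> carrier_mat (2^n) (2^n)" unfolding M_def by simp
  have index_M: "M $$ (x,y) = (if x = y XOR a then c1 * pauli_sign n b1 y + c2 * pauli_sign n b2 y else 0)"
    if "x < 2^n" "y < 2^n" for x y
    unfolding M_def using that by (simp add: index_pauli)
  have "(pauli_X n j * M) $$ (a XOR ?e, 0) = c1 + c2"
    using index_pauli_mult_left[OF Mc ae _ e, of 0 0] index_M[OF a, of 0] by simp
  moreover have "(M * pauli_X n j) $$ (a XOR ?e, 0) = c1 * pauli_sign n b1 ?e + c2 * pauli_sign n b2 ?e"
    using index_pauli_mult_right[OF Mc ae _ e, of 0] index_M[OF ae e] by (simp add: xor.commute)
  moreover have "pauli_sign n b ?e = (if bit b j then -1 else 1)" for b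
    using pauli_sign_single_bit[OF j] by (simp add: pauli_sign_commute[of n b])
  ultimately have "c1 + c2 = c1 * (if bit b1 j then -1 else 1) + c2 * (if bit b2 j then -1 else 1)"
    using comm by simp
  with bits c show False by (cases "bit b1 j") auto
qed

section \<open>Clifford circuits normalize the Pauli operators\<close>

lemma embed_gate_pauli_intertwine:
  assumes vs: "valid_support n qs" and a: "a < 2^n" and a': "a' < 2^n"
    and same_a: "\<And>i. i < n \<Longrightarrow> i \<notin> set qs \<Longrightarrow> bit a' i = bit a i"
    and same_b: "\<And>i. i < n \<Longrightarrow> i \<notin> set qs \<Longrightarrow> bit b' i = bit b i"
    and local: "\<And>x y. x < 2^n \<Longrightarrow> y < 2^n \<Longrightarrow>
      U $$ (local_index qs x, local_index qs (y XOR a)) * (\<Prod>i\<in>set qs. sign_bit b y i) =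
      c * ((\<Prod>i\<in>set qs. sign_bit b' (x XOR a') i) * U $$ (local_index qs (x XOR a'), local_index qs y))"
  shows "embed_gate n qs U * pauli n a b = c \<cdot>\<^sub>m (pauli n a' b' * embed_gate n qs U)"
    (is "?G * _ = _")
proof (rule eq_matI)
  fix x y assume "x < dim_row (c \<cdot>\<^sub>m (pauli n a' b' * ?G))" "y < dim_col (c \<cdot>\<^sub>m (pauli n a' b' * ?G))"
  then have x: "x < 2^n" and y: "y < 2^n" by auto
  have ya: "y XOR a < 2^n" and xa: "x XOR a' < 2^n" using x y a a' xor_less_pow2 by auto
  have lhs: "(?G * pauli n a b) $$ (x,y) = ?G $$ (x, y XOR a) * pauli_sign n b y"
    using x y a by (intro index_pauli_mult_right) auto
  have rhs: "(c \<cdot>\<^sub>m (pauli n a' b' * ?G)) $$ (x,y) = c * (pauli_sign n b' (x XOR a') * ?G $$ (x XOR a', y))"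
  proof -
    have "(pauli n a' b' * ?G) $$ (x,y) = pauli_sign n b' (x XOR a') * ?G $$ (x XOR a', y)"
      using x y a' by (intro index_pauli_mult_left) auto
    then show ?thesis using x y by (subst index_smult_mat) auto
  qed
  have agree: "agree_outside n qs x (y XOR a) = agree_outside n qs (x XOR a') y"
    using same_a by (auto simp: agree_outside_def bit_xor_iff)
  show "(?G * pauli n a b) $$ (x,y) = (c \<cdot>\<^sub>m (pauli n a' b' * ?G)) $$ (x,y)"
  proof (cases "agree_outside n qs x (y XOR a)")
    case False
    then show ?thesis unfolding lhs rhs using agree x y ya xa by (simp add: embed_gate_index)
  next
    case True
    have below: "set qs \<subseteq> {..<n}" using vs by (auto simp: valid_support_def)
    have outside: "(\<Prod>i\<in>{..<n} - set qs. sign_bit b y i) = (\<Prod>i\<in>{..<n} - set qs. sign_bit b' (x XOR a') i)"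
      using True same_a same_b by (intro prod.cong) (auto simp: agree_outside_def bit_xor_iff sign_bit_def)
    show ?thesis
      unfolding lhs rhs pauli_sign_split[OF below, of b y] pauli_sign_split[OF below, of b' "x XOR a'"]
        outside[symmetric]
      using True agree x y ya xa local[OF x y] by (simp add: embed_gate_index algebra_simps)
  qed
qed auto

lemma hadamard_pauli_intertwine:
  assumes j: "j < n" and a: "a < 2^n"
  shows "embed_gate n [j] hadamard * pauli n a b =
    (if bit a j \<and> bit b j then -1 else 1) \<cdot>\<^sub>m
      (pauli n (update_bit n a j (bit b j)) (update_bit n b j (bit a j)) * embed_gate n [j] hadamard)"
proof (rule embed_gate_pauli_intertwine)
  show "valid_support n [j]" using j by (simp add: valid_support_def)
  fix x y :: nat
  show "hadamard $$ (local_index [j] x, local_index [j] (y XOR a)) * (\<Prod>i\<in>set [j]. sign_bit b y i) =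
    (if bit a j \<and> bit b j then -1 else 1) *
      ((\<Prod>i\<in>set [j]. sign_bit (update_bit n b j (bit a j)) (x XOR update_bit n a j (bit b j)) i) *
       hadamard $$ (local_index [j] (x XOR update_bit n a j (bit b j)), local_index [j] y))"
    using j unfolding local_index_single sign_bit_def
    by (cases "bit x j"; cases "bit y j"; cases "bit a j"; cases "bit b j")
       (simp_all add: hadamard_def bit_xor_iff bit_update_bit)
qed (use a in \<open>auto simp: update_bit_less bit_update_bit\<close>)

lemma phase_S_pauli_intertwine:
  assumes j: "j < n" and a: "a < 2^n"
  shows "embed_gate n [j] phase_S * pauli n a b =
    (if bit a j then \<i> else 1) \<cdot>\<^sub>m (pauli n a (update_bit n b j (bit b j \<noteq> bit a j)) * embed_gate n [j] phase_S)"
proof (rule embed_gate_pauli_intertwine)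
  show "valid_support n [j]" using j by (simp add: valid_support_def)
  fix x y :: nat
  show "phase_S $$ (local_index [j] x, local_index [j] (y XOR a)) * (\<Prod>i\<in>set [j]. sign_bit b y i) =
    (if bit a j then \<i> else 1) *
      ((\<Prod>i\<in>set [j]. sign_bit (update_bit n b j (bit b j \<noteq> bit a j)) (x XOR a) i) *
       phase_S $$ (local_index [j] (x XOR a), local_index [j] y))"
    using j unfolding local_index_single sign_bit_def
    by (cases "bit x j"; cases "bit y j"; cases "bit a j"; cases "bit b j")
       (simp_all add: phase_S_def bit_xor_iff bit_update_bit)
qed (use a in \<open>auto simp: update_bit_less bit_update_bit\<close>)

lemma cnot_pauli_intertwine:
  assumes c: "c < n" and t: "t < n" and ct: "c \<noteq> t" and a: "a < 2^n"
  shows "embed_gate n [c,t] cnot * pauli n a b =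
    pauli n (update_bit n a t (bit a t \<noteq> bit a c)) (update_bit n b c (bit b c \<noteq> bit b t)) *
      embed_gate n [c,t] cnot"
proof -
  have "embed_gate n [c,t] cnot * pauli n a b =
    1 \<cdot>\<^sub>m (pauli n (update_bit n a t (bit a t \<noteq> bit a c)) (update_bit n b c (bit b c \<noteq> bit b t)) *
      embed_gate n [c,t] cnot)"
  proof (rule embed_gate_pauli_intertwine)
    show "valid_support n [c,t]" using c t ct by (simp add: valid_support_def)
    fix x y :: nat
    show "cnot $$ (local_index [c,t] x, local_index [c,t] (y XOR a)) * (\<Prod>i\<in>set [c,t]. sign_bit b y i) =
      1 * ((\<Prod>i\<in>set [c,t]. sign_bit (update_bit n b c (bit b c \<noteq> bit b t))
              (x XOR update_bit n a t (bit a t \<noteq> bit a c)) i) *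
        cnot $$ (local_index [c,t] (x XOR update_bit n a t (bit a t \<noteq> bit a c)), local_index [c,t] y))"
      using c t ct unfolding local_index_pair sign_bit_def
      by (cases "bit x c"; cases "bit y c"; cases "bit a c"; cases "bit b c";
          cases "bit x t"; cases "bit y t"; cases "bit a t"; cases "bit b t")
         (simp_all add: cnot_def bit_xor_iff bit_update_bit)
  qed (use a ct in \<open>auto simp: update_bit_less bit_update_bit\<close>)
  then show ?thesis by simp
qed

definition pauli_normalizer :: "nat \<Rightarrow> complex mat \<Rightarrow> bool" where
  "pauli_normalizer n C \<longleftrightarrow> unitary_mat (2^n) C \<and>
     (\<forall>M. scaled_pauli n M \<longrightarrow> scaled_pauli n (C * M * cadj C) \<and> scaled_pauli n (cadj C * M * C))"

lemma pauli_normalizerI: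
  assumes G: "unitary_mat (2^n) G"
    and forward: "\<And>a b. a < 2^n \<Longrightarrow> b < 2^n \<Longrightarrow> \<exists>c a' b'. c \<noteq> 0 \<and> a' < 2^n \<and> b' < 2^n \<and>
      G * pauli n a b = c \<cdot>\<^sub>m (pauli n a' b' * G)"
    and backward: "\<And>a' b'. a' < 2^n \<Longrightarrow> b' < 2^n \<Longrightarrow> \<exists>c a b. c \<noteq> 0 \<and> a < 2^n \<and> b < 2^n \<and>
      G * pauli n a b = c \<cdot>\<^sub>m (pauli n a' b' * G)"
  shows "pauli_normalizer n G"
  unfolding pauli_normalizer_def
proof (intro conjI allI impI G)
  have Gc: "G \<in> carrier_mat (2^n) (2^n)" and GG: "G * cadj G = 1\<^sub>m (2^n)" and GG': "cadj G * G = 1\<^sub>m (2^n)"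
    using G unitary_mat_cadj_mult by (auto simp: unitary_mat_def)
  note dims = carrier_matD[OF Gc]
  fix M assume "scaled_pauli n M"
  then obtain k a b where k: "k \<noteq> 0" and ab: "a < 2^n" "b < 2^n" and M: "M = k \<cdot>\<^sub>m pauli n a b"
    by (auto simp: scaled_pauli_def)
  obtain c a' b' where c: "c \<noteq> 0" "a' < 2^n" "b' < 2^n" and e: "G * pauli n a b = c \<cdot>\<^sub>m (pauli n a' b' * G)"
    using forward[OF ab] by blast
  have "G * M * cadj G = k \<cdot>\<^sub>m (G * pauli n a b * cadj G)"
    unfolding M using dims by (simp add: smult_mult_mat mult_smult_mat)
  also have "\<dots> = (k * c) \<cdot>\<^sub>m (pauli n a' b' * (G * cadj G))"
    unfolding e using dims by (simp add: smult_mult_mat mat_mult_assoc smult_smult_mat)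
  finally show "scaled_pauli n (G * M * cadj G)"
    using GG k c by (simp add: scaled_pauliI)
  obtain d a'' b'' where d: "d \<noteq> 0" "a'' < 2^n" "b'' < 2^n" and e': "G * pauli n a'' b'' = d \<cdot>\<^sub>m (pauli n a b * G)"
    using backward[OF ab] by blast
  have PG: "pauli n a b * G = (1 / d) \<cdot>\<^sub>m (G * pauli n a'' b'')"
    unfolding e' using d by (simp add: smult_smult_mat)
  have "cadj G * M * G = k \<cdot>\<^sub>m (cadj G * (pauli n a b * G))"
    unfolding M using dims by (simp add: smult_mult_mat mult_smult_mat mat_mult_assoc)
  also have "\<dots> = (k / d) \<cdot>\<^sub>m ((cadj G * G) * pauli n a'' b'')"
    unfolding PG using dims by (simp add: mat_mult_assoc mult_smult_mat smult_smult_mat)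
  finally show "scaled_pauli n (cadj G * M * G)"
    using GG' k d by (simp add: scaled_pauliI)
qed

lemma pauli_normalizer_one: "pauli_normalizer n (1\<^sub>m (2^n))"
  unfolding pauli_normalizer_def unitary_mat_def using scaled_pauli_carrier by fastforce

lemma pauli_normalizer_cadj: "pauli_normalizer n C \<Longrightarrow> pauli_normalizer n (cadj C)"
  unfolding pauli_normalizer_def by (auto simp: unitary_mat_cadj)

lemma pauli_normalizer_mult:
  assumes G: "pauli_normalizer n G" and C: "pauli_normalizer n C"
  shows "pauli_normalizer n (G * C)"
proof -
  have Gc: "G \<in> carrier_mat (2^n) (2^n)" and Cc: "C \<in> carrier_mat (2^n) (2^n)"
    using G C by (auto simp: pauli_normalizer_def unitary_mat_def)
  note dims = carrier_matD[OF Gc] carrier_matD[OF Cc]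
  have "scaled_pauli n (G * C * M * cadj (G * C)) \<and> scaled_pauli n (cadj (G * C) * M * (G * C))"
    if M: "scaled_pauli n M" for M
  proof -
    note dM = carrier_matD[OF scaled_pauli_carrier[OF M]]
    have "G * C * M * cadj (G * C) = G * (C * M * cadj C) * cadj G"
      "cadj (G * C) * M * (G * C) = cadj C * (cadj G * M * G) * C"
      using dims dM by (simp_all add: cadj_mult[OF Gc Cc] mat_mult_assoc)
    then show ?thesis using G C M unfolding pauli_normalizer_def by metis
  qed
  then show ?thesis
    using G C unfolding pauli_normalizer_def by (auto intro: unitary_mat_mult)
qed

lemma pauli_normalizer_hadamard:
  assumes j: "j < n"
  shows "pauli_normalizer n (embed_gate n [j] hadamard)"
proof (rule pauli_normalizerI)
  show "unitary_mat (2^n) (embed_gate n [j] hadamard)"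
    using j unitary_hadamard by (intro embed_gate_unitary) (auto simp: valid_support_def)
  fix a b :: nat assume "a < 2^n" "b < 2^n"
  then show "\<exists>c a' b'. c \<noteq> 0 \<and> a' < 2^n \<and> b' < 2^n \<and>
      embed_gate n [j] hadamard * pauli n a b = c \<cdot>\<^sub>m (pauli n a' b' * embed_gate n [j] hadamard)"
    using hadamard_pauli_intertwine[OF j] by (intro exI conjI) (auto simp: update_bit_less)
next
  fix a' b' :: nat assume a': "a' < 2^n" and b': "b' < 2^n"
  define a where "a = update_bit n a' j (bit b' j)"
  define b where "b = update_bit n b' j (bit a' j)"
  have "update_bit n a j (bit b j) = a'" "update_bit n b j (bit a j) = b'"
    by (rule nat_eq_if_bits_below[OF update_bit_less a'] nat_eq_if_bits_below[OF update_bit_less b'];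
        use j in \<open>auto simp: a_def b_def bit_update_bit\<close>)+
  moreover have "a < 2^n" "b < 2^n" by (simp_all add: a_def b_def update_bit_less)
  ultimately show "\<exists>c a b. c \<noteq> 0 \<and> a < 2^n \<and> b < 2^n \<and>
      embed_gate n [j] hadamard * pauli n a b = c \<cdot>\<^sub>m (pauli n a' b' * embed_gate n [j] hadamard)"
    using hadamard_pauli_intertwine[OF j, of a b] by (intro exI conjI) auto
qed

lemma pauli_normalizer_phase_S:
  assumes j: "j < n"
  shows "pauli_normalizer n (embed_gate n [j] phase_S)"
proof (rule pauli_normalizerI)
  show "unitary_mat (2^n) (embed_gate n [j] phase_S)"
    using j unitary_phase_S by (intro embed_gate_unitary) (auto simp: valid_support_def)
  fix a b :: nat assume "a < 2^n" "b < 2^n"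
  then show "\<exists>c a' b'. c \<noteq> 0 \<and> a' < 2^n \<and> b' < 2^n \<and>
      embed_gate n [j] phase_S * pauli n a b = c \<cdot>\<^sub>m (pauli n a' b' * embed_gate n [j] phase_S)"
    using phase_S_pauli_intertwine[OF j] by (intro exI conjI) (auto simp: update_bit_less)
next
  fix a' b' :: nat assume a': "a' < 2^n" and b': "b' < 2^n"
  define b where "b = update_bit n b' j (bit b' j \<noteq> bit a' j)"
  have "update_bit n b j (bit b j \<noteq> bit a' j) = b'"
    by (rule nat_eq_if_bits_below[OF update_bit_less b']) (use j in \<open>auto simp: b_def bit_update_bit\<close>)
  moreover have "b < 2^n" by (simp add: b_def update_bit_less)
  ultimately show "\<exists>c a b. c \<noteq> 0 \<and> a < 2^n \<and> b < 2^n \<and>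
      embed_gate n [j] phase_S * pauli n a b = c \<cdot>\<^sub>m (pauli n a' b' * embed_gate n [j] phase_S)"
    using phase_S_pauli_intertwine[OF j a', of b] a'
    by (intro exI[of _ "if bit a' j then \<i> else 1"] exI[of _ a'] exI[of _ b] conjI) auto
qed

lemma pauli_normalizer_cnot:
  assumes c: "c < n" and t: "t < n" and ct: "c \<noteq> t"
  shows "pauli_normalizer n (embed_gate n [c,t] cnot)"
proof (rule pauli_normalizerI)
  show "unitary_mat (2^n) (embed_gate n [c,t] cnot)"
    using c t ct unitary_cnot by (intro embed_gate_unitary) (auto simp: valid_support_def)
  fix a b :: nat assume "a < 2^n" "b < 2^n"
  then show "\<exists>k a' b'. k \<noteq> 0 \<and> a' < 2^n \<and> b' < 2^n \<and>
      embed_gate n [c,t] cnot * pauli n a b = k \<cdot>\<^sub>m (pauli n a' b' * embed_gate n [c,t] cnot)"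
    using cnot_pauli_intertwine[OF c t ct] by (intro exI[of _ 1] exI conjI) (auto simp: update_bit_less)
next
  fix a' b' :: nat assume a': "a' < 2^n" and b': "b' < 2^n"
  define a where "a = update_bit n a' t (bit a' t \<noteq> bit a' c)"
  define b where "b = update_bit n b' c (bit b' c \<noteq> bit b' t)"
  have "update_bit n a t (bit a t \<noteq> bit a c) = a'" "update_bit n b c (bit b c \<noteq> bit b t) = b'"
    by (rule nat_eq_if_bits_below[OF update_bit_less a'] nat_eq_if_bits_below[OF update_bit_less b'];
        use c t ct in \<open>auto simp: a_def b_def bit_update_bit\<close>)+
  moreover have "a < 2^n" "b < 2^n" by (simp_all add: a_def b_def update_bit_less)
  ultimately show "\<exists>k a b. k \<noteq> 0 \<and> a < 2^n \<and> b < 2^n \<and>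
      embed_gate n [c,t] cnot * pauli n a b = k \<cdot>\<^sub>m (pauli n a' b' * embed_gate n [c,t] cnot)"
    using cnot_pauli_intertwine[OF c t ct, of a b] by (intro exI[of _ 1] exI conjI) auto
qed

lemma pauli_normalizer_clifford_circuit: "clifford_circuit n C \<Longrightarrow> pauli_normalizer n C"
proof (induction rule: clifford_circuit.induct)
  case cc_id
  then show ?case by (rule pauli_normalizer_one)
next
  case (cc_step C G)
  then have "pauli_normalizer n G"
    unfolding clifford_gate_def
    using pauli_normalizer_hadamard pauli_normalizer_phase_S pauli_normalizer_cnot by auto
  then show ?case using cc_step.IH by (rule pauli_normalizer_mult)
qed

lemma unitary_conj_anticommute:
  assumes E: "unitary_mat m E" and A: "A \<in> carrier_mat m m" and B: "B \<in> carrier_mat m m"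
    and anti: "A * B = (-1) \<cdot>\<^sub>m (B * A)"
  shows "(E * A * cadj E) * (E * B * cadj E) = (-1) \<cdot>\<^sub>m ((E * B * cadj E) * (E * A * cadj E))"
proof -
  have Ec: "E \<in> carrier_mat m m" and EE: "cadj E * E = 1\<^sub>m m"
    using E unitary_mat_cadj_mult by (auto simp: unitary_mat_def)
  have conj_mult: "(E * X * cadj E) * (E * Y * cadj E) = E * (X * Y) * cadj E"
    if "X \<in> carrier_mat m m" "Y \<in> carrier_mat m m" for X Y
  proof -
    have "(E * X * cadj E) * (E * Y * cadj E) = E * X * (cadj E * E) * Y * cadj E"
      using Ec that by (simp add: mat_mult_assoc)
    then show ?thesis using Ec that by (simp add: EE mat_mult_assoc)
  qed
  show ?thesis
    unfolding conj_mult[OF A B] conj_mult[OF B A] anti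
    using Ec A B by (simp add: mult_smult_mat smult_mult_mat)
qed

lemma pauli_Z_not_scalar: "j < n \<Longrightarrow> pauli_Z n j \<noteq> k \<cdot>\<^sub>m 1\<^sub>m (2^n)"
proof
  assume j: "j < n" and scalar: "pauli_Z n j = k \<cdot>\<^sub>m 1\<^sub>m (2^n)"
  have "(2::nat)^j < 2^n" using j by simp
  then have "pauli_Z n j $$ (0,0) = 1" "pauli_Z n j $$ (2^j, 2^j) = -1"
    using pauli_sign_single_bit[OF j] by (simp_all add: index_pauli bit_exp_iff)
  with scalar \<open>2^j < 2^n\<close> show False by simp
qed

text \<open>Pull \<open>Z\<close> on qubit 0 back through \<open>E\<close> and pick a single-qubit Pauli anticommuting with the result.\<close>

lemma pauli_normalizer_conj_anticommutes_Z0: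
  assumes n: "0 < n" and E: "pauli_normalizer n E"
  obtains j \<sigma> k a b where "j < n" "\<sigma> = pauli_X n j \<or> \<sigma> = pauli_Z n j"
    "k \<noteq> 0" "a < 2^n" "b < 2^n" "bit a 0" "E * \<sigma> * cadj E = k \<cdot>\<^sub>m pauli n a b"
proof -
  let ?Z = "pauli_Z n 0"
  have E_unitary: "unitary_mat (2^n) E" and conj: "\<And>M. scaled_pauli n M \<Longrightarrow>
      scaled_pauli n (E * M * cadj E) \<and> scaled_pauli n (cadj E * M * E)"
    using E by (auto simp: pauli_normalizer_def)
  then have Ec: "E \<in> carrier_mat (2^n) (2^n)" and EE: "E * cadj E = 1\<^sub>m (2^n)"
    by (auto simp: unitary_mat_def)
  note dims = carrier_matD[OF Ec]
  define W where "W = cadj E * ?Z * E"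
  have Wc: "W \<in> carrier_mat (2^n) (2^n)" unfolding W_def using Ec by auto
  have "(1::nat) < 2^n" using n one_less_power[of "2::nat" n] by simp
  then have "scaled_pauli n W" unfolding W_def using conj scaled_pauli_pauli[of 0 n 1] by simp
  then obtain kw aw bw where kw: "kw \<noteq> 0" and w: "aw < 2^n" "bw < 2^n" and W: "W = kw \<cdot>\<^sub>m pauli n aw bw"
    unfolding scaled_pauli_def by blast
  have "E * W * cadj E = (E * cadj E) * ?Z * (E * cadj E)"
    unfolding W_def using dims by (simp add: mat_mult_assoc)
  then have EWE: "E * W * cadj E = ?Z" using EE by simp
  have "aw \<noteq> 0 \<or> bw \<noteq> 0"
  proof (rule ccontr)
    assume "\<not> (aw \<noteq> 0 \<or> bw \<noteq> 0)"
    then have "E * W * cadj E = kw \<cdot>\<^sub>m (E * cadj E)"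
      unfolding W using dims by (simp add: mult_smult_mat smult_mult_mat)
    then show False using EWE EE pauli_Z_not_scalar[OF n, of kw] by simp
  qed
  then obtain j \<sigma> where j: "j < n" and \<sigma>: "\<sigma> = pauli_X n j \<or> \<sigma> = pauli_Z n j"
    and anti: "\<sigma> * pauli n aw bw = (-1) \<cdot>\<^sub>m (pauli n aw bw * \<sigma>)"
    using exists_anticommuting_single_qubit_pauli[OF w] by blast
  have \<sigma>c: "\<sigma> \<in> carrier_mat (2^n) (2^n)" and \<sigma>_pauli: "scaled_pauli n \<sigma>"
    using \<sigma> j scaled_pauli_pauli[of _ n] by auto
  obtain k a b where k: "k \<noteq> 0" and ab: "a < 2^n" "b < 2^n" and B: "E * \<sigma> * cadj E = k \<cdot>\<^sub>m pauli n a b"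
    using conj[OF \<sigma>_pauli] unfolding scaled_pauli_def by blast
  have "\<sigma> * W = (-1) \<cdot>\<^sub>m (W * \<sigma>)"
    unfolding W using anti carrier_matD[OF \<sigma>c]
    by (simp add: mult_smult_mat smult_mult_mat smult_smult_mat)
  from unitary_conj_anticommute[OF E_unitary \<sigma>c Wc this]
  have "(k \<cdot>\<^sub>m pauli n a b) * ?Z = (-1) \<cdot>\<^sub>m (?Z * (k \<cdot>\<^sub>m pauli n a b))"
    unfolding EWE B .
  then have "bit a 0" by (rule pauli_anticommute_Z_imp_bit[OF n ab(1) k])
  with j \<sigma> k ab B that show thesis by blast
qed

section \<open>Light cones of shallow circuits\<close>

text \<open>Support is expressed through commutation, not through a tensor factorization.\<close>

definition supported_on :: "nat \<Rightarrow> nat set \<Rightarrow> complex mat \<Rightarrow> bool" where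
  "supported_on n S M \<longleftrightarrow> M \<in> carrier_mat (2^n) (2^n) \<and>
     (\<forall>qs U. valid_support n qs \<and> set qs \<inter> S = {} \<and> U \<in> carrier_mat (2 ^ length qs) (2 ^ length qs) \<longrightarrow>
        embed_gate n qs U * M = M * embed_gate n qs U)"

lemma supported_on_commute:
  "supported_on n S M \<Longrightarrow> valid_support n qs \<Longrightarrow> set qs \<inter> S = {} \<Longrightarrow>
   U \<in> carrier_mat (2 ^ length qs) (2 ^ length qs) \<Longrightarrow> embed_gate n qs U * M = M * embed_gate n qs U"
  by (auto simp: supported_on_def)

lemma supported_on_carrier: "supported_on n S M \<Longrightarrow> M \<in> carrier_mat (2^n) (2^n)"
  by (auto simp: supported_on_def)

lemma supported_on_mono: "supported_on n S M \<Longrightarrow> S \<subseteq> S' \<Longrightarrow> supported_on n S' M"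
  unfolding supported_on_def by blast

lemma supported_on_embed_gate:
  "valid_support n qs \<Longrightarrow> supported_on n (set qs) (embed_gate n qs U)"
  unfolding supported_on_def by (auto intro: embed_gate_commute)

lemma supported_on_conj:
  assumes M: "supported_on n S M" and G: "supported_on n S' G" and H: "supported_on n S' H"
    and "S \<subseteq> S'"
  shows "supported_on n S' (G * M * H)"
  unfolding supported_on_def
proof (intro conjI allI impI)
  note carriers = supported_on_carrier[OF M] supported_on_carrier[OF G] supported_on_carrier[OF H]
  then show "G * M * H \<in> carrier_mat (2^n) (2^n)" by auto
  fix qs and U :: "complex mat"
  assume gate: "valid_support n qs \<and> set qs \<inter> S' = {} \<and> U \<in> carrier_mat (2 ^ length qs) (2 ^ length qs)"
  let ?K = "embed_gate n qs U"
  have KM: "?K * M = M * ?K" and KG: "?K * G = G * ?K" and KH: "?K * H = H * ?K"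
    using gate \<open>S \<subseteq> S'\<close> supported_on_commute[OF M] supported_on_commute[OF G] supported_on_commute[OF H]
    by blast+
  note dims = carrier_matD[OF carriers(1)] carrier_matD[OF carriers(2)] carrier_matD[OF carriers(3)]
  have "?K * (G * M * H) = (?K * G) * M * H"
    using dims by (simp add: mat_mult_assoc)
  also have "\<dots> = G * (?K * M) * H"
    unfolding KG using dims by (simp add: mat_mult_assoc)
  also have "\<dots> = G * M * (?K * H)"
    unfolding KM using dims by (simp add: mat_mult_assoc)
  also have "\<dots> = (G * M * H) * ?K"
    unfolding KH using dims by (simp add: mat_mult_assoc)
  finally show "?K * (G * M * H) = (G * M * H) * ?K" .
qed

lemma supported_on_embed_gate_conj:
  assumes vs: "valid_support n qs" and U: "unitary_mat (2 ^ length qs) U" and M: "supported_on n S M"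
  defines "S' \<equiv> if set qs \<inter> S = {} then S else S \<union> set qs"
  shows "supported_on n S' (embed_gate n qs U * M * cadj (embed_gate n qs U))"
    and "supported_on n S' (cadj (embed_gate n qs U) * M * embed_gate n qs U)"
proof -
  let ?G = "embed_gate n qs U"
  have Uc: "U \<in> carrier_mat (2 ^ length qs) (2 ^ length qs)" using U by (simp add: unitary_mat_def)
  then have cadj_G: "cadj ?G = embed_gate n qs (cadj U)" by (rule cadj_embed_gate)
  have unit: "?G * cadj ?G = 1\<^sub>m (2^n)" "cadj ?G * ?G = 1\<^sub>m (2^n)"
    using embed_gate_unitary[OF vs U] unitary_mat_cadj_mult by (auto simp: unitary_mat_def)
  note dims = carrier_matD[OF supported_on_carrier[OF M]]
  have "supported_on n S' (?G * M * cadj ?G) \<and> supported_on n S' (cadj ?G * M * ?G)"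
  proof (cases "set qs \<inter> S = {}")
    case True
    have "?G * M = M * ?G" "cadj ?G * M = M * cadj ?G"
      using supported_on_commute[OF M vs True] Uc by (auto simp: cadj_G)
    then have "?G * M * cadj ?G = M" "cadj ?G * M * ?G = M"
      using unit dims by (simp_all add: mat_mult_assoc)
    then show ?thesis using M True by (simp add: S'_def)
  next
    case False
    have "supported_on n (S \<union> set qs) ?G" "supported_on n (S \<union> set qs) (cadj ?G)"
      using supported_on_embed_gate[OF vs] by (auto simp: cadj_G intro: supported_on_mono)
    then show ?thesis using False M by (simp add: S'_def supported_on_conj)
  qed
  then show "supported_on n S' (?G * M * cadj ?G)" "supported_on n S' (cadj ?G * M * ?G)" by auto
qed

lemma card_extend_support:
  assumes "finite X" "length qs \<le> 2"
  shows "card (if set qs \<inter> X = {} then X else X \<union> set qs) \<le> card X + card (X \<inter> set qs)"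
proof (cases "set qs \<inter> X = {}")
  case False
  have "card (X \<union> set qs) = card X + card (set qs - X)"
    using assms(1) by (metis Un_Diff_cancel card_Un_disjoint Diff_disjoint finite_Diff2 finite_set inf_commute)
  moreover have "card (set qs - X) < card (set qs)"
    using False by (intro psubset_card_mono) auto
  moreover have "card (set qs) \<le> 2" using assms(2) card_length[of qs] by linarith
  moreover have "1 \<le> card (X \<inter> set qs)"
    using False assms(1) by (simp add: Suc_le_eq card_gt_0_iff inf_commute)
  ultimately show ?thesis using False by simp
qed simp

lemma layer_carrier: "layer n T L \<Longrightarrow> L \<in> carrier_mat (2^n) (2^n)"
  by (induction rule: layer.induct) auto

text \<open>A layer at most doubles a support: each qubit of \<open>S\<close> drags in at most the partner of its gate.\<close>

lemma supported_on_layer_conj: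
  assumes "layer n T L" "finite S" "supported_on n S M"
  shows "\<exists>S'. finite S' \<and> S' \<subseteq> S \<union> T \<and> card S' \<le> card S + card (S \<inter> T) \<and>
    supported_on n S' (L * M * cadj L)"
  using assms
proof (induction rule: layer.induct)
  case layer_empty
  then show ?case using supported_on_carrier[of n S M] by (intro exI[of _ S]) auto
next
  case (layer_gate T L qs U)
  let ?G = "embed_gate n qs U"
  obtain S1 where S1: "finite S1" "S1 \<subseteq> S \<union> T" "card S1 \<le> card S + card (S \<inter> T)"
    "supported_on n S1 (L * M * cadj L)"
    using layer_gate.IH layer_gate.prems by blast
  define S2 where "S2 = (if set qs \<inter> S1 = {} then S1 else S1 \<union> set qs)"
  have "?G * L * M * cadj (?G * L) = ?G * (L * M * cadj L) * cadj ?G"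
    using layer_carrier[OF layer_gate.hyps(1)] supported_on_carrier[OF layer_gate.prems(2)]
    by (simp add: cadj_mult[OF embed_gate_carrier layer_carrier[OF layer_gate.hyps(1)]] mat_mult_assoc)
  then have "supported_on n S2 (?G * L * M * cadj (?G * L))"
    using supported_on_embed_gate_conj(1)[OF layer_gate.hyps(2,6) S1(4)] by (simp add: S2_def)
  moreover have "card S2 \<le> card S + card (S \<inter> (T \<union> set qs))"
  proof -
    have "S1 \<inter> set qs \<subseteq> S \<inter> set qs" using S1(2) layer_gate.hyps(5) by blast
    then have "card (S1 \<inter> set qs) \<le> card (S \<inter> set qs)" using layer_gate.prems(1) by (simp add: card_mono)
    moreover have "card (S \<inter> (T \<union> set qs)) = card (S \<inter> T) + card (S \<inter> set qs)"
      using layer_gate.prems(1) layer_gate.hyps(5) by (subst card_Un_disjoint[symmetric]) (auto simp: Int_Un_distrib)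
    ultimately show ?thesis
      using card_extend_support[OF S1(1) layer_gate.hyps(4)] S1(3) by (simp add: S2_def)
  qed
  moreover have "finite S2" "S2 \<subseteq> S \<union> (T \<union> set qs)" using S1(1,2) by (auto simp: S2_def)
  ultimately show ?case by blast
qed

lemma supported_on_layer_conj_cadj:
  assumes "layer n T L" "finite S" "supported_on n S M"
  shows "\<exists>S'. finite S' \<and> S' \<subseteq> S \<union> T \<and> card S' \<le> card S + card (S \<inter> T) \<and>
    supported_on n S' (cadj L * M * L)"
  using assms
proof (induction arbitrary: S M rule: layer.induct)
  case layer_empty
  then show ?case using supported_on_carrier[of n S M] by (intro exI[of _ S]) auto
next
  case (layer_gate T L qs U)
  let ?G = "embed_gate n qs U"
  define S1 where "S1 = (if set qs \<inter> S = {} then S else S \<union> set qs)"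
  have S1: "finite S1" "supported_on n S1 (cadj ?G * M * ?G)"
    using supported_on_embed_gate_conj(2)[OF layer_gate.hyps(2,6) layer_gate.prems(2)] layer_gate.prems(1)
    by (simp_all add: S1_def)
  then obtain S2 where S2: "finite S2" "S2 \<subseteq> S1 \<union> T" "card S2 \<le> card S1 + card (S1 \<inter> T)"
    "supported_on n S2 (cadj L * (cadj ?G * M * ?G) * L)"
    using layer_gate.IH by blast
  have "cadj (?G * L) * M * (?G * L) = cadj L * (cadj ?G * M * ?G) * L"
    using layer_carrier[OF layer_gate.hyps(1)] supported_on_carrier[OF layer_gate.prems(2)]
    by (simp add: cadj_mult[OF embed_gate_carrier layer_carrier[OF layer_gate.hyps(1)]] mat_mult_assoc)
  moreover have "card S2 \<le> card S + card (S \<inter> (T \<union> set qs))"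
  proof -
    have "S1 \<inter> T = S \<inter> T" using layer_gate.hyps(5) by (auto simp: S1_def)
    moreover have "card (S \<inter> (T \<union> set qs)) = card (S \<inter> T) + card (S \<inter> set qs)"
      using layer_gate.prems(1) layer_gate.hyps(5) by (subst card_Un_disjoint[symmetric]) (auto simp: Int_Un_distrib)
    ultimately show ?thesis
      using card_extend_support[OF layer_gate.prems(1) layer_gate.hyps(4)] S2(3) by (simp add: S1_def)
  qed
  moreover have "S2 \<subseteq> S \<union> (T \<union> set qs)" using S2(2) by (auto simp: S1_def split: if_splits)
  ultimately show ?case using S2 by auto
qed

lemma depth_circuit_carrier: "depth_circuit n d Q \<Longrightarrow> Q \<in> carrier_mat (2^n) (2^n)"
  by (induction d arbitrary: Q) (auto dest: layer_carrier)

lemma supported_on_depth_circuit_conj: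
  assumes "depth_circuit n d Q" "finite S" "supported_on n S M"
  shows "\<exists>S'. finite S' \<and> card S' \<le> 2^d * card S \<and> supported_on n S' (Q * M * cadj Q)"
  using assms
proof (induction d arbitrary: Q)
  case 0
  then show ?case using supported_on_carrier[of n S M] by auto
next
  case (Suc d)
  then obtain T L Q' where L: "layer n T L" and Q': "depth_circuit n d Q'" and Q: "Q = L * Q'" by auto
  obtain S1 where S1: "finite S1" "card S1 \<le> 2^d * card S" "supported_on n S1 (Q' * M * cadj Q')"
    using Suc.IH[OF Q' Suc.prems(2,3)] by blast
  obtain S2 where S2: "finite S2" "card S2 \<le> card S1 + card (S1 \<inter> T)"
    "supported_on n S2 (L * (Q' * M * cadj Q') * cadj L)"
    using supported_on_layer_conj[OF L S1(1,3)] by blast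
  have "Q * M * cadj Q = L * (Q' * M * cadj Q') * cadj L"
    using layer_carrier[OF L] depth_circuit_carrier[OF Q'] supported_on_carrier[OF Suc.prems(3)]
    unfolding Q by (simp add: cadj_mult[OF layer_carrier[OF L] depth_circuit_carrier[OF Q']] mat_mult_assoc)
  moreover have "card S2 \<le> 2^Suc d * card S"
    using S2(2) S1(2) card_mono[OF S1(1), of "S1 \<inter> T"] by simp
  ultimately show ?case using S2 by auto
qed

lemma supported_on_depth_circuit_conj_cadj:
  assumes "depth_circuit n d Q" "finite S" "supported_on n S M"
  shows "\<exists>S'. finite S' \<and> card S' \<le> 2^d * card S \<and> supported_on n S' (cadj Q * M * Q)"
  using assms
proof (induction d arbitrary: Q S M)
  case 0
  then show ?case using supported_on_carrier[of n S M] by auto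
next
  case (Suc d)
  then obtain T L Q' where L: "layer n T L" and Q': "depth_circuit n d Q'" and Q: "Q = L * Q'" by auto
  obtain S1 where S1: "finite S1" "card S1 \<le> card S + card (S \<inter> T)" "supported_on n S1 (cadj L * M * L)"
    using supported_on_layer_conj_cadj[OF L Suc.prems(2,3)] by blast
  obtain S2 where S2: "finite S2" "card S2 \<le> 2^d * card S1"
    "supported_on n S2 (cadj Q' * (cadj L * M * L) * Q')"
    using Suc.IH[OF Q' S1(1,3)] by blast
  have "cadj Q * M * Q = cadj Q' * (cadj L * M * L) * Q'"
    using layer_carrier[OF L] depth_circuit_carrier[OF Q'] supported_on_carrier[OF Suc.prems(3)]
    unfolding Q by (simp add: cadj_mult[OF layer_carrier[OF L] depth_circuit_carrier[OF Q']] mat_mult_assoc)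
  moreover have "card S1 \<le> 2 * card S"
    using S1(2) card_mono[OF Suc.prems(2), of "S \<inter> T"] by simp
  then have "card S2 \<le> 2^Suc d * card S"
    using le_trans[OF S2(2) mult_le_mono2[of "card S1" "2 * card S" "2^d"]] by (simp add: ac_simps)
  ultimately show ?case using S2 by auto
qed

lemma supported_on_pauli_X: "j < n \<Longrightarrow> supported_on n {j} (pauli_X n j)"
  using supported_on_embed_gate[of n "[j]"] by (simp add: pauli_X_eq_embed_gate valid_support_def)

lemma supported_on_pauli_Z: "j < n \<Longrightarrow> supported_on n {j} (pauli_Z n j)"
  using supported_on_embed_gate[of n "[j]"] by (simp add: pauli_Z_eq_embed_gate valid_support_def)

lemma pauli_pair_not_local:
  assumes a: "a < 2^n" and c: "c1 \<noteq> 0" "c2 \<noteq> 0" and S: "finite S"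
    and M: "supported_on n S (c1 \<cdot>\<^sub>m pauli n a b + c2 \<cdot>\<^sub>m pauli n a (b XOR mask n))"
  shows "n \<le> card S"
proof (rule ccontr)
  assume "\<not> n \<le> card S"
  then have "\<not> {..<n} \<subseteq> S" using card_mono[OF S, of "{..<n}"] by auto
  then obtain j where j: "j < n" "j \<notin> S" by auto
  have bits: "bit b j \<noteq> bit (b XOR mask n) j" using j by (simp add: bit_xor_iff bit_mask_iff)
  have "pauli_X n j * (c1 \<cdot>\<^sub>m pauli n a b + c2 \<cdot>\<^sub>m pauli n a (b XOR mask n)) =
      (c1 \<cdot>\<^sub>m pauli n a b + c2 \<cdot>\<^sub>m pauli n a (b XOR mask n)) * pauli_X n j"
    unfolding pauli_X_eq_embed_gate[OF j(1)]
    by (rule supported_on_commute[OF M]) (use j in \<open>auto simp: valid_support_def\<close>)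
  with pauli_X_not_commute_pauli_pair[OF j(1) a bits c] show False by (rule notE)
qed

section \<open>The phase gate and the CNOT fan-out\<close>

definition phase_mat :: "complex \<Rightarrow> complex mat" where
  "phase_mat \<omega> = mat 2 2 (\<lambda>(i,k). if i = k then (if i = 0 then 1 else \<omega>) else 0)"

definition phase_gate :: "nat \<Rightarrow> complex \<Rightarrow> complex mat" where
  "phase_gate n \<omega> = embed_gate n [0] (phase_mat \<omega>)"

lemma phase_mat_carrier [simp]: "phase_mat \<omega> \<in> carrier_mat 2 2"
  by (simp add: phase_mat_def)

lemma unitary_phase_mat:
  assumes "\<omega> * cnj \<omega> = 1"
  shows "unitary_mat 2 (phase_mat \<omega>)"
  unfolding unitary_mat_def
proof (intro conjI eq_matI)
  fix i j assume "i < dim_row (1\<^sub>m 2 :: complex mat)" "j < dim_col (1\<^sub>m 2 :: complex mat)"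
  then have ij: "i < 2" "j < 2" by auto
  show "(phase_mat \<omega> * cadj (phase_mat \<omega>)) $$ (i, j) = 1\<^sub>m 2 $$ (i, j)"
    unfolding index_mult_mat_2[OF phase_mat_carrier cadj_carrier[OF phase_mat_carrier] ij]
    using ij assms by (auto simp: phase_mat_def less_2_cases_iff)
qed (auto simp: phase_mat_def)

lemma phase_gate_carrier [simp]: "phase_gate n \<omega> \<in> carrier_mat (2^n) (2^n)"
  by (simp add: phase_gate_def)

lemma phase_gate_dim [simp]: "dim_row (phase_gate n \<omega>) = 2^n" "dim_col (phase_gate n \<omega>) = 2^n"
  by (simp_all add: phase_gate_def)

lemma cadj_phase_gate: "cadj (phase_gate n \<omega>) = phase_gate n (cnj \<omega>)"
proof -
  have "cadj (phase_mat \<omega>) = phase_mat (cnj \<omega>)"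
    by (rule eq_matI) (auto simp: phase_mat_def)
  then show ?thesis by (simp add: phase_gate_def cadj_embed_gate)
qed

lemma index_phase_gate:
  assumes "0 < n" "x < 2^n" "y < 2^n"
  shows "phase_gate n \<omega> $$ (x,y) = (if x = y then (if bit x 0 then \<omega> else 1) else 0)"
proof -
  have "agree_outside n [0] x y \<and> bit x 0 = bit y 0 \<longleftrightarrow> x = y"
    using agree_outside_local_index_eq[OF assms(2,3), of "[0]"] by (simp add: local_index_single of_bool_eq_iff)
  then show ?thesis
    using assms by (auto simp: phase_gate_def embed_gate_index local_index_single phase_mat_def)
qed

lemma phase_gate_conj_pauli:
  assumes n: "0 < n" and a: "a < 2^n" and a0: "bit a 0"
  shows "cadj (phase_gate n \<omega>) * pauli n a b * phase_gate n \<omega> =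
    of_real (Re \<omega>) \<cdot>\<^sub>m pauli n a b + (- \<i> * of_real (Im \<omega>)) \<cdot>\<^sub>m (pauli n a b * pauli_Z n 0)"
proof (rule eq_matI)
  let ?T = "phase_gate n \<omega>"
  fix x y assume "x < dim_row (of_real (Re \<omega>) \<cdot>\<^sub>m pauli n a b + (- \<i> * of_real (Im \<omega>)) \<cdot>\<^sub>m (pauli n a b * pauli_Z n 0))"
    "y < dim_col (of_real (Re \<omega>) \<cdot>\<^sub>m pauli n a b + (- \<i> * of_real (Im \<omega>)) \<cdot>\<^sub>m (pauli n a b * pauli_Z n 0))"
  then have x: "x < 2^n" and y: "y < 2^n" by auto
  have PZ: "pauli n a b * pauli_Z n 0 = pauli n a (b XOR 1)"
    using pauli_mult[OF a, of 0 b 1] by simp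
  have "(cadj ?T * pauli n a b * ?T) $$ (x,y) = (cadj ?T * pauli n a b) $$ (x,y) * (if bit y 0 then \<omega> else 1)"
    using mult_carrier_mat[OF cadj_carrier[OF phase_gate_carrier] pauli_carrier]
    by (rule index_mult_diag_right[OF _ _ x y]) (auto simp: index_phase_gate[OF n])
  also have "\<dots> = (if bit x 0 then cnj \<omega> else 1) * pauli n a b $$ (x,y) * (if bit y 0 then \<omega> else 1)"
    by (subst index_mult_diag_left[OF _ _ x y]) (auto simp: cadj_phase_gate index_phase_gate[OF n])
  also have "\<dots> = (of_real (Re \<omega>) \<cdot>\<^sub>m pauli n a b + (- \<i> * of_real (Im \<omega>)) \<cdot>\<^sub>m (pauli n a b * pauli_Z n 0)) $$ (x,y)"
  proof (cases "x = y XOR a")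
    case True
    then have "bit x 0 \<longleftrightarrow> \<not> bit y 0" using a0 by (simp add: bit_xor_iff)
    moreover obtain r i where "\<omega> = Complex r i" by (cases \<omega>)
    ultimately show ?thesis
      unfolding PZ using True x y pauli_sign_single_bit[OF n, of y]
      by (cases "bit y 0") (simp_all add: index_pauli pauli_sign_xor_left Complex_eq algebra_simps)
  qed (unfold PZ, use x y in \<open>simp add: index_pauli\<close>)
  finally show "(cadj ?T * pauli n a b * ?T) $$ (x,y) =
      (of_real (Re \<omega>) \<cdot>\<^sub>m pauli n a b + (- \<i> * of_real (Im \<omega>)) \<cdot>\<^sub>m (pauli n a b * pauli_Z n 0)) $$ (x,y)" .
qed (auto simp: phase_gate_def)

lemma depth_circuit_phase_gate:
  assumes "\<omega> * cnj \<omega> = 1"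
  shows "depth_circuit n 1 (phase_gate n \<omega>)"
proof (cases "n = 0")
  case True
  have "phase_gate 0 \<omega> = 1\<^sub>m 1"
    by (rule eq_matI) (auto simp: phase_gate_def embed_gate_index local_index_single phase_mat_def agree_outside_def)
  then have "phase_gate 0 \<omega> = 1\<^sub>m (2^0) * 1\<^sub>m (2^0)" by simp
  then show ?thesis
    unfolding True One_nat_def depth_circuit.simps by (intro exI conjI) (rule layer.layer_empty, rule refl)
next
  case False
  have "layer n ({} \<union> set [0]) (phase_gate n \<omega> * 1\<^sub>m (2^n))"
    unfolding phase_gate_def
    by (rule layer.layer_gate[OF layer.layer_empty]) (use False unitary_phase_mat[OF assms] in \<open>auto simp: valid_support_def\<close>)
  then show ?thesis
    unfolding One_nat_def depth_circuit.simps
    by (intro exI conjI) (assumption, rule refl, simp add: right_mult_one_mat[OF phase_gate_carrier])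
qed

lemma cnot_conj_pauli_Z_type:
  assumes c: "c < n" "0 < c" and b: "b < 2^n"
  shows "embed_gate n [c,0] cnot * pauli n 0 b * embed_gate n [c,0] cnot =
    pauli n 0 (update_bit n b c (bit b c \<noteq> bit b 0))"
proof -
  let ?G = "embed_gate n [c,0] cnot"
  have "update_bit n 0 0 (bit (0::nat) 0 \<noteq> bit (0::nat) c) = 0"
    by (rule nat_eq_if_bits_below[OF update_bit_less]) (auto simp: bit_update_bit)
  then have "?G * pauli n 0 b = pauli n 0 (update_bit n b c (bit b c \<noteq> bit b 0)) * ?G"
    using cnot_pauli_intertwine[of c n 0 0 b] c by simp
  then have "?G * pauli n 0 b * ?G = pauli n 0 (update_bit n b c (bit b c \<noteq> bit b 0)) * (?G * ?G)"
    by (simp add: mat_mult_assoc)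
  then show ?thesis using embed_cnot_square[of n c 0] c by (simp add: valid_support_def)
qed

fun cnot_fanout :: "nat \<Rightarrow> nat \<Rightarrow> complex mat" where
  "cnot_fanout n 0 = 1\<^sub>m (2^n)"
| "cnot_fanout n (Suc k) = embed_gate n [Suc k, 0] cnot * cnot_fanout n k"

lemma cnot_fanout_carrier [simp]: "cnot_fanout n k \<in> carrier_mat (2^n) (2^n)"
  by (induction k) auto

lemma clifford_circuit_cnot_fanout: "k \<le> n - 1 \<Longrightarrow> clifford_circuit n (cnot_fanout n k)"
proof (induction k)
  case 0
  then show ?case by (simp add: clifford_circuit.cc_id)
next
  case (Suc k)
  then have "clifford_gate n (embed_gate n [Suc k, 0] cnot)"
    unfolding clifford_gate_def by (intro disjI2 exI[of _ "Suc k"] exI[of _ 0] conjI) auto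
  with Suc show ?case by (auto intro: clifford_circuit.cc_step)
qed

definition fanout_Z_pattern :: "nat \<Rightarrow> nat \<Rightarrow> nat" where
  "fanout_Z_pattern k b = b XOR (if bit b 0 then mask (Suc k) XOR 1 else 0)"

lemma bit_fanout_Z_pattern:
  "bit (fanout_Z_pattern k b) i \<longleftrightarrow> bit b i \<noteq> (bit b 0 \<and> 0 < i \<and> i \<le> k)"
  by (auto simp: fanout_Z_pattern_def bit_xor_iff bit_mask_iff bit_Suc_0_iff)

lemma fanout_Z_pattern_less: "k < n \<Longrightarrow> b < 2^n \<Longrightarrow> fanout_Z_pattern k b < 2^n"
  using bit_less_pow2[of b n] by (intro less_pow2_if_bits) (auto simp: bit_fanout_Z_pattern)

lemma cadj_cnot_fanout_Suc:
  "cadj (cnot_fanout n (Suc k)) = cadj (cnot_fanout n k) * embed_gate n [Suc k, 0] cnot"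
  using cadj_mult[OF embed_gate_carrier cnot_fanout_carrier] by (simp add: cadj_embed_gate cadj_cnot)

lemma cadj_cnot_fanout_conj_pauli_Z_type:
  "k < n \<Longrightarrow> b < 2^n \<Longrightarrow>
    cadj (cnot_fanout n k) * pauli n 0 b * cnot_fanout n k = pauli n 0 (fanout_Z_pattern k b)"
proof (induction k arbitrary: b)
  case 0
  then show ?case by (simp add: fanout_Z_pattern_def mask_Suc_exp)
next
  case (Suc k)
  let ?G = "embed_gate n [Suc k, 0] cnot" and ?F = "cnot_fanout n k"
  have k: "k < n" "Suc k < n" using Suc.prems by auto
  define b' where "b' = update_bit n b (Suc k) (bit b (Suc k) \<noteq> bit b 0)"
  have b': "b' < 2^n" "?G * pauli n 0 b * ?G = pauli n 0 b'"
    unfolding b'_def by (simp_all add: update_bit_less cnot_conj_pauli_Z_type[OF k(2) _ Suc.prems(2)])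
  have "cadj (cnot_fanout n (Suc k)) * pauli n 0 b * cnot_fanout n (Suc k) = cadj ?F * (?G * pauli n 0 b * ?G) * ?F"
    unfolding cadj_cnot_fanout_Suc unfolding cnot_fanout.simps(2)
    using carrier_matD[OF cnot_fanout_carrier[of n k]] by (simp add: mat_mult_assoc)
  also have "\<dots> = pauli n 0 (fanout_Z_pattern (Suc k) b)"
    unfolding b'(2) Suc.IH[OF k(1) b'(1)]
    by (rule arg_cong[where f = "pauli n 0"],
        rule nat_eq_if_bits_below[OF fanout_Z_pattern_less[OF k(1) b'(1)] fanout_Z_pattern_less[OF k(2) Suc.prems(2)]])
       (auto simp: b'_def bit_update_bit bit_fanout_Z_pattern)
  finally show ?case .
qed

lemma cnot_fanout_conj_pauli_Z_type:
  "k < n \<Longrightarrow> b < 2^n \<Longrightarrow>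
    cnot_fanout n k * pauli n 0 b * cadj (cnot_fanout n k) = pauli n 0 (fanout_Z_pattern k b)"
proof (induction k)
  case 0
  then show ?case by (simp add: fanout_Z_pattern_def mask_Suc_exp)
next
  case (Suc k)
  let ?G = "embed_gate n [Suc k, 0] cnot" and ?F = "cnot_fanout n k"
  have k: "k < n" "Suc k < n" using Suc.prems by auto
  have b': "fanout_Z_pattern k b < 2^n" using k(1) Suc.prems(2) by (rule fanout_Z_pattern_less)
  have "cnot_fanout n (Suc k) * pauli n 0 b * cadj (cnot_fanout n (Suc k)) = ?G * (?F * pauli n 0 b * cadj ?F) * ?G"
    unfolding cadj_cnot_fanout_Suc unfolding cnot_fanout.simps(2)
    using carrier_matD[OF cnot_fanout_carrier[of n k]] by (simp add: mat_mult_assoc)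
  also have "\<dots> = pauli n 0 (fanout_Z_pattern (Suc k) b)"
    unfolding Suc.IH[OF k(1) Suc.prems(2)] cnot_conj_pauli_Z_type[OF k(2) zero_less_Suc b']
    by (rule arg_cong[where f = "pauli n 0"],
        rule nat_eq_if_bits_below[OF update_bit_less fanout_Z_pattern_less[OF k(2) Suc.prems(2)]])
       (use k in \<open>auto simp: bit_update_bit bit_fanout_Z_pattern\<close>)
  finally show ?case .
qed

lemma cnot_fanout_conj_pauli_Z0:
  assumes "0 < n"
  shows "cadj (cnot_fanout n (n - 1)) * pauli_Z n 0 * cnot_fanout n (n - 1) = pauli n 0 (mask n)"
    and "cnot_fanout n (n - 1) * pauli_Z n 0 * cadj (cnot_fanout n (n - 1)) = pauli n 0 (mask n)"
proof -
  have "fanout_Z_pattern (n - 1) 1 = mask n"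
    using assms by (intro bit_eqI) (auto simp: bit_fanout_Z_pattern bit_mask_iff bit_Suc_0_iff)
  moreover have "(1::nat) < 2^n" using assms one_less_power[of "2::nat" n] by simp
  ultimately show "cadj (cnot_fanout n (n - 1)) * pauli_Z n 0 * cnot_fanout n (n - 1) = pauli n 0 (mask n)"
    and "cnot_fanout n (n - 1) * pauli_Z n 0 * cadj (cnot_fanout n (n - 1)) = pauli n 0 (mask n)"
    using cadj_cnot_fanout_conj_pauli_Z_type[of "n - 1" n 1] cnot_fanout_conj_pauli_Z_type[of "n - 1" n 1] assms
    by simp_all
qed

section \<open>Separating the two orders\<close>

lemma pauli_normalizer_conj_pauli_combination:
  assumes D: "pauli_normalizer n D" and DZ: "cadj D * pauli_Z n 0 * D = pauli n 0 (mask n)"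
    and ab: "a < 2^n" "b < 2^n"
  obtains k a' b' where "k \<noteq> 0" "a' < 2^n" "\<And>c1 c2. cadj D * (c1 \<cdot>\<^sub>m pauli n a b + c2 \<cdot>\<^sub>m (pauli n a b * pauli_Z n 0)) * D =
      (c1 * k) \<cdot>\<^sub>m pauli n a' b' + (c2 * k) \<cdot>\<^sub>m pauli n a' (b' XOR mask n)"
proof -
  let ?P = "pauli n a b" and ?Z = "pauli_Z n 0"
  have Dc: "D \<in> carrier_mat (2^n) (2^n)" and DD: "D * cadj D = 1\<^sub>m (2^n)"
    using D by (auto simp: pauli_normalizer_def unitary_mat_def)
  note dims = carrier_matD[OF Dc]
  obtain k a' b' where k: "k \<noteq> 0" and a': "a' < 2^n" and DP: "cadj D * ?P * D = k \<cdot>\<^sub>m pauli n a' b'"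
    using D scaled_pauli_pauli[OF ab] unfolding pauli_normalizer_def scaled_pauli_def by blast
  have "cadj D * (?P * ?Z) * D = cadj D * ?P * (D * cadj D) * ?Z * D"
    using dims by (simp add: DD mat_mult_assoc)
  also have "\<dots> = (cadj D * ?P * D) * (cadj D * ?Z * D)"
    using dims by (simp add: mat_mult_assoc)
  also have "\<dots> = k \<cdot>\<^sub>m pauli n a' (b' XOR mask n)"
    unfolding DP DZ using pauli_mult[OF a', of 0 b' "mask n"] by (simp add: smult_mult_mat)
  finally have DPZ: "cadj D * (?P * ?Z) * D = k \<cdot>\<^sub>m pauli n a' (b' XOR mask n)" .
  show thesis
  proof (rule that[OF k a'])
    fix c1 c2
    show "cadj D * (c1 \<cdot>\<^sub>m ?P + c2 \<cdot>\<^sub>m (?P * ?Z)) * D =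
        (c1 * k) \<cdot>\<^sub>m pauli n a' b' + (c2 * k) \<cdot>\<^sub>m pauli n a' (b' XOR mask n)"
      unfolding mult_smult_add_mult[OF cadj_carrier[OF Dc] pauli_carrier
          mult_carrier_mat[OF pauli_carrier pauli_carrier] Dc] DP DPZ
      by (simp add: smult_smult_mat)
  qed
qed

lemma phase_sandwich_conj_not_local:
  assumes n: "0 < n" and E: "pauli_normalizer n E" and D: "pauli_normalizer n D"
    and DZ: "cadj D * pauli_Z n 0 * D = pauli n 0 (mask n)" and \<omega>: "Re \<omega> \<noteq> 0" "Im \<omega> \<noteq> 0"
  defines "V \<equiv> cadj E * phase_gate n \<omega> * D"
  obtains j \<sigma> where "j < n" "\<sigma> = pauli_X n j \<or> \<sigma> = pauli_Z n j"
    "\<And>S. finite S \<Longrightarrow> supported_on n S (cadj V * \<sigma> * V) \<Longrightarrow> n \<le> card S"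
proof -
  let ?T = "phase_gate n \<omega>"
  obtain j \<sigma> k a b where j: "j < n" and \<sigma>: "\<sigma> = pauli_X n j \<or> \<sigma> = pauli_Z n j"
    and k: "k \<noteq> 0" and ab: "a < 2^n" "b < 2^n" "bit a 0" and E\<sigma>: "E * \<sigma> * cadj E = k \<cdot>\<^sub>m pauli n a b"
    using pauli_normalizer_conj_anticommutes_Z0[OF n E] by metis
  obtain k' a' b' where k': "k' \<noteq> 0" and a': "a' < 2^n"
    and D_conj: "\<And>c1 c2. cadj D * (c1 \<cdot>\<^sub>m pauli n a b + c2 \<cdot>\<^sub>m (pauli n a b * pauli_Z n 0)) * D =
      (c1 * k') \<cdot>\<^sub>m pauli n a' b' + (c2 * k') \<cdot>\<^sub>m pauli n a' (b' XOR mask n)"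
    using pauli_normalizer_conj_pauli_combination[OF D DZ ab(1,2)] by metis
  have Ec: "E \<in> carrier_mat (2^n) (2^n)" and Dc: "D \<in> carrier_mat (2^n) (2^n)"
    using E D by (auto simp: pauli_normalizer_def unitary_mat_def)
  have \<sigma>c: "\<sigma> \<in> carrier_mat (2^n) (2^n)" using \<sigma> by auto
  note dims = carrier_matD[OF Ec] carrier_matD[OF Dc] carrier_matD[OF \<sigma>c]
  have "cadj V = cadj D * (cadj ?T * E)"
    unfolding V_def
    by (simp only: cadj_mult[OF mult_carrier_mat[OF cadj_carrier[OF Ec] phase_gate_carrier] Dc]
        cadj_mult[OF cadj_carrier[OF Ec] phase_gate_carrier] cadj_cadj)
  then have "cadj V * \<sigma> * V = cadj D * (cadj ?T * (E * \<sigma> * cadj E) * ?T) * D"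
    unfolding V_def using dims by (simp add: mat_mult_assoc)
  also have "\<dots> = cadj D * (k \<cdot>\<^sub>m (of_real (Re \<omega>) \<cdot>\<^sub>m pauli n a b +
      (- \<i> * of_real (Im \<omega>)) \<cdot>\<^sub>m (pauli n a b * pauli_Z n 0))) * D"
    unfolding E\<sigma> phase_gate_conj_pauli[OF n ab(1,3), symmetric]
    using dims by (simp add: mult_smult_mat smult_mult_mat)
  also have "k \<cdot>\<^sub>m (of_real (Re \<omega>) \<cdot>\<^sub>m pauli n a b + (- \<i> * of_real (Im \<omega>)) \<cdot>\<^sub>m (pauli n a b * pauli_Z n 0)) =
      (k * of_real (Re \<omega>)) \<cdot>\<^sub>m pauli n a b + (k * (- \<i> * of_real (Im \<omega>))) \<cdot>\<^sub>m (pauli n a b * pauli_Z n 0)"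
    by (rule eq_matI) (auto simp: algebra_simps)
  finally have heisenberg: "cadj V * \<sigma> * V = (k * of_real (Re \<omega>) * k') \<cdot>\<^sub>m pauli n a' b' +
      (k * (- \<i> * of_real (Im \<omega>)) * k') \<cdot>\<^sub>m pauli n a' (b' XOR mask n)"
    unfolding D_conj .
  show thesis
  proof (rule that[OF j \<sigma>])
    fix S assume "finite S" "supported_on n S (cadj V * \<sigma> * V)"
    then show "n \<le> card S"
      unfolding heisenberg using k k' \<omega> by (intro pauli_pair_not_local[OF a']) auto
  qed
qed

lemma shallow_circuit_not_phase_sandwich:
  assumes Q: "depth_circuit n d Q" and small: "2^d < n"
    and E: "pauli_normalizer n E" and D: "pauli_normalizer n D"
    and DZ: "cadj D * pauli_Z n 0 * D = pauli n 0 (mask n)" and \<omega>: "Re \<omega> \<noteq> 0" "Im \<omega> \<noteq> 0"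
  shows "Q \<noteq> cadj E * phase_gate n \<omega> * D" and "cadj Q \<noteq> cadj E * phase_gate n \<omega> * D"
proof -
  let ?V = "cadj E * phase_gate n \<omega> * D"
  have n: "0 < n" using small by (cases n) auto
  obtain j \<sigma> where j: "j < n" and \<sigma>: "\<sigma> = pauli_X n j \<or> \<sigma> = pauli_Z n j"
    and spread: "\<And>S. finite S \<Longrightarrow> supported_on n S (cadj ?V * \<sigma> * ?V) \<Longrightarrow> n \<le> card S"
    using phase_sandwich_conj_not_local[OF n E D DZ \<omega>] by metis
  have \<sigma>_local: "supported_on n {j} \<sigma>"
    using \<sigma> supported_on_pauli_X[OF j] supported_on_pauli_Z[OF j] by auto
  show "Q \<noteq> ?V"
  proof
    assume "Q = ?V"
    with supported_on_depth_circuit_conj_cadj[OF Q _ \<sigma>_local]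
    obtain S where "finite S" "card S \<le> 2^d" "supported_on n S (cadj ?V * \<sigma> * ?V)" by auto
    with spread small show False by fastforce
  qed
  show "cadj Q \<noteq> ?V"
  proof
    assume "cadj Q = ?V"
    then have "Q = cadj ?V" by (metis cadj_cadj)
    with supported_on_depth_circuit_conj[OF Q _ \<sigma>_local]
    obtain S where "finite S" "card S \<le> 2^d" "supported_on n S (cadj ?V * \<sigma> * ?V)" by auto
    with spread small show False by fastforce
  qed
qed

text \<open>\<open>(3 + 4i)/5\<close> plays the role of the \<open>T\<close> gate's \<open>e^(i\<pi>/4)\<close>: a unit complex number with
  nonzero real and imaginary part, but with rational coordinates.\<close>

definition omega :: complex where
  "omega = Complex (3/5) (4/5)"

lemma omega_unit: "omega * cnj omega = 1"
  by (simp add: omega_def complex_eq_iff)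

definition fanout_then_phase :: "nat \<Rightarrow> complex mat" where
  "fanout_then_phase n = phase_gate n omega * cnot_fanout n (n - 1)"

definition phase_then_fanout :: "nat \<Rightarrow> complex mat" where
  "phase_then_fanout n = cnot_fanout n (n - 1) * phase_gate n omega"

lemma fanout_then_phase_in_A_CQ_1: "fanout_then_phase \<in> A_CQ_1"
  unfolding A_CQ_1_def fanout_then_phase_def
  using depth_circuit_phase_gate[OF omega_unit] clifford_circuit_cnot_fanout by blast

lemma phase_then_fanout_in_A_QC_1: "phase_then_fanout \<in> A_QC_1"
  unfolding A_QC_1_def phase_then_fanout_def
  using depth_circuit_phase_gate[OF omega_unit] clifford_circuit_cnot_fanout by blast

lemma fanout_then_phase_not_in_A_QC_1: "fanout_then_phase \<notin> A_QC_1"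
proof
  assume "fanout_then_phase \<in> A_QC_1"
  then obtain d where "\<forall>n. \<exists>C Q. clifford_circuit n C \<and> depth_circuit n d Q \<and> fanout_then_phase n = C * Q"
    unfolding A_QC_1_def by blast
  then obtain C Q where C: "clifford_circuit (2^d + 1) C" and Q: "depth_circuit (2^d + 1) d Q"
    and decomposition: "fanout_then_phase (2^d + 1) = C * Q"
    by blast
  define n where "n = 2^d + (1::nat)"
  have C_normalizer: "pauli_normalizer n C"
    using pauli_normalizer_clifford_circuit C unfolding n_def by blast
  then have Cc: "C \<in> carrier_mat (2^n) (2^n)" and CC: "cadj C * C = 1\<^sub>m (2^n)"
    by (simp_all add: pauli_normalizer_def unitary_mat_def unitary_mat_cadj_mult)
  note dims = carrier_matD[OF Cc] carrier_matD[OF depth_circuit_carrier[OF Q[folded n_def]]]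
    carrier_matD[OF cnot_fanout_carrier[of n "n - 1"]]
  have "Q = (cadj C * C) * Q" using CC dims by simp
  also have "\<dots> = cadj C * (phase_gate n omega * cnot_fanout n (n - 1))"
    using dims decomposition by (simp add: mat_mult_assoc n_def fanout_then_phase_def)
  finally have "Q = cadj C * phase_gate n omega * cnot_fanout n (n - 1)"
    using dims by (simp add: mat_mult_assoc)
  moreover have "2^d < n" and n_pos: "0 < n" by (simp_all add: n_def)
  moreover have "Re omega \<noteq> 0" "Im omega \<noteq> 0" by (simp_all add: omega_def)
  ultimately show False
    using shallow_circuit_not_phase_sandwich(1)[OF Q[folded n_def] _ C_normalizer
        pauli_normalizer_clifford_circuit[OF clifford_circuit_cnot_fanout] cnot_fanout_conj_pauli_Z0(1)[OF n_pos]]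
    by blast
qed

lemma phase_then_fanout_not_in_A_CQ_1: "phase_then_fanout \<notin> A_CQ_1"
proof
  assume "phase_then_fanout \<in> A_CQ_1"
  then obtain d where "\<forall>n. \<exists>C Q. clifford_circuit n C \<and> depth_circuit n d Q \<and> phase_then_fanout n = Q * C"
    unfolding A_CQ_1_def by blast
  then obtain C Q where C: "clifford_circuit (2^d + 1) C" and Q: "depth_circuit (2^d + 1) d Q"
    and decomposition: "phase_then_fanout (2^d + 1) = Q * C"
    by blast
  define n where "n = 2^d + (1::nat)"
  let ?F = "cnot_fanout n (n - 1)" and ?T = "phase_gate n omega"
  have C_normalizer: "pauli_normalizer n C"
    using pauli_normalizer_clifford_circuit C unfolding n_def by blast
  then have Cc: "C \<in> carrier_mat (2^n) (2^n)" and CC: "C * cadj C = 1\<^sub>m (2^n)"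
    by (simp_all add: pauli_normalizer_def unitary_mat_def)
  note dims = carrier_matD[OF Cc] carrier_matD[OF depth_circuit_carrier[OF Q[folded n_def]]]
    carrier_matD[OF cnot_fanout_carrier[of n "n - 1"]]
  have "Q = Q * (C * cadj C)" using CC dims by simp
  also have "\<dots> = ?F * ?T * cadj C"
    using dims decomposition by (simp add: mat_mult_assoc n_def phase_then_fanout_def)
  finally have "cadj Q = C * (cadj ?T * cadj ?F)"
    by (simp only: cadj_mult[OF mult_carrier_mat[OF cnot_fanout_carrier phase_gate_carrier] cadj_carrier[OF Cc]]
        cadj_mult[OF cnot_fanout_carrier phase_gate_carrier] cadj_cadj)
  then have "cadj Q = cadj (cadj C) * phase_gate n (cnj omega) * cadj ?F"
    using dims by (simp add: cadj_phase_gate mat_mult_assoc)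
  moreover have "2^d < n" and n_pos: "0 < n" by (simp_all add: n_def)
  moreover have "Re (cnj omega) \<noteq> 0" "Im (cnj omega) \<noteq> 0" by (simp_all add: omega_def)
  moreover have "cadj (cadj ?F) * pauli_Z n 0 * cadj ?F = pauli n 0 (mask n)"
    using cnot_fanout_conj_pauli_Z0(2)[OF n_pos] by simp
  ultimately show False
    using shallow_circuit_not_phase_sandwich(2)[OF Q[folded n_def] _
        pauli_normalizer_cadj[OF C_normalizer]
        pauli_normalizer_cadj[OF pauli_normalizer_clifford_circuit[OF clifford_circuit_cnot_fanout]]]
    by blast
qed

theorem theorem1p2:
  shows "\<not> A_CQ_1 \<subseteq> A_QC_1 \<and> \<not> A_QC_1 \<subseteq> A_CQ_1"
  using fanout_then_phase_in_A_CQ_1 fanout_then_phase_not_in_A_QC_1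
    phase_then_fanout_in_A_QC_1 phase_then_fanout_not_in_A_CQ_1 by blast

end
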